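(* Let $\Omega\subset\mathbb{P}(\mathbb{R}^{d+1})$ be a proper convex open set and $G\le\mathrm{Aut}(\Omega)$ a subgroup acting cocompactly on $\Omega$. Then $\mathrm{Ext}(\Omega)\subset\overline{G\cdot x}$ for every $x\in\Omega$. Moreover, if $G$ preserves no proper projective subspace of $\mathbb{P}(\mathbb{R}^{d+1})$, then $\mathrm{Ext}(\Omega)\subset\overline{G\cdot x}$ for every $x\in\overline\Omega$.
   Context: $\Omega$ is convex if $L\cap\Omega$ is connected and $\ne L$ for every projective line $L$, and proper if $\overline{L\cap\Omega}\ne L$ for every $L$. $\mathrm{Aut}(\Omega)=\{\varphi\in\mathrm{PGL}_{d+1}(\mathbb{R}):\varphi(\Omega)=\Omega\}$. The extreme points $\mathrm{Ext}(\Omega)$ are the points of $\partial\Omega$ not contained in the interior of a line segment (connected subset of a projective line) contained in $\partial\Omega$. Closures are taken in $\mathbb{P}(\mathbb{R}^{d+1})$. *)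

theory Defs
  imports "HOL-Analysis.Analysis"
begin

text \<open>Real projective space P(R^n), n = CARD('n) = d+1.  A point is a
  one-dimensional linear subspace (a line through 0) of R^n.\<close>

definition proj_points :: "(real^'n) set set" where
  "proj_points = {span {v} | v. v \<noteq> 0}"

definition proj_open :: "(real^'n) set set \<Rightarrow> bool" where
  "proj_open U \<longleftrightarrow> U \<subseteq> proj_points \<and> open {v. v \<noteq> 0 \<and> span {v} \<in> U}"

lemma istopology_proj_open: "istopology proj_open"
proof -
  have i: "{v. v \<noteq> 0 \<and> span {v} \<in> S \<inter> T} =
      {v. v \<noteq> 0 \<and> span {v} \<in> S} \<inter> {v. v \<noteq> 0 \<and> span {v} \<in> T}" for S T :: "(real^'n) set set"
    by auto
  have u: "{v. v \<noteq> 0 \<and> span {v} \<in> \<Union>K} = (\<Union>U\<in>K. {v. v \<noteq> 0 \<and> span {v} \<in> U})"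
    for K :: "(real^'n) set set set"
    by auto
  show ?thesis
    unfolding istopology_def proj_open_def
    by (auto simp only: i u intro!: open_Int open_UN)
qed

definition proj_top :: "(real^'n) set topology" where
  "proj_top = topology proj_open"

definition proj_lines :: "(real^'n) set set set" where
  "proj_lines = {{p \<in> proj_points. p \<subseteq> W} | W. subspace W \<and> dim W = 2}"

definition proj_convex :: "(real^'n) set set \<Rightarrow> bool" where
  "proj_convex \<Omega> \<longleftrightarrow> \<Omega> \<subseteq> proj_points \<and>
     (\<forall>L\<in>proj_lines. connectedin proj_top (L \<inter> \<Omega>) \<and> L \<inter> \<Omega> \<noteq> L)"

definition proj_proper :: "(real^'n) set set \<Rightarrow> bool" where
  "proj_proper \<Omega> \<longleftrightarrow> (\<forall>L\<in>proj_lines. proj_top closure_of (L \<inter> \<Omega>) \<noteq> L)"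

definition proj_act :: "real^'n^'n \<Rightarrow> (real^'n) set \<Rightarrow> (real^'n) set" where
  "proj_act A p = (\<lambda>v. A *v v) ` p"

text \<open>Subgroups of PGL_{d+1}(R) are represented by their full preimages in
  GL_{d+1}(R), i.e. subgroups of invertible matrices.\<close>

definition matrix_group :: "(real^'n^'n) set \<Rightarrow> bool" where
  "matrix_group G \<longleftrightarrow> (\<forall>A\<in>G. invertible A) \<and> mat 1 \<in> G \<and>
     (\<forall>A\<in>G. \<forall>B\<in>G. A ** B \<in> G) \<and> (\<forall>A\<in>G. matrix_inv A \<in> G)"

definition in_Aut :: "(real^'n^'n) set \<Rightarrow> (real^'n) set set \<Rightarrow> bool" where
  "in_Aut G \<Omega> \<longleftrightarrow> (\<forall>A\<in>G. invertible A \<and> proj_act A ` \<Omega> = \<Omega>)"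

definition orbit :: "(real^'n^'n) set \<Rightarrow> (real^'n) set \<Rightarrow> (real^'n) set set" where
  "orbit G x = {proj_act A x | A. A \<in> G}"

definition acts_cocompactly :: "(real^'n^'n) set \<Rightarrow> (real^'n) set set \<Rightarrow> bool" where
  "acts_cocompactly G \<Omega> \<longleftrightarrow>
     (\<exists>K. compactin proj_top K \<and> K \<subseteq> \<Omega> \<and> \<Omega> = (\<Union>A\<in>G. proj_act A ` K))"

definition proj_Ext :: "(real^'n) set set \<Rightarrow> (real^'n) set set" where
  "proj_Ext \<Omega> = {p \<in> proj_top frontier_of \<Omega>.
     \<not> (\<exists>L\<in>proj_lines. \<exists>S. S \<subseteq> L \<and> connectedin proj_top S \<and>
          S \<subseteq> proj_top frontier_of \<Omega> \<and> p \<in> (subtopology proj_top L) interior_of S)}"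

definition preserves_proper_subspace :: "(real^'n^'n) set \<Rightarrow> bool" where
  "preserves_proper_subspace G \<longleftrightarrow>
     (\<exists>W. subspace W \<and> W \<noteq> {0} \<and> W \<noteq> UNIV \<and> (\<forall>A\<in>G. (\<lambda>v. A *v v) ` W = W))"

end

theory Submission
  imports Defs
begin

text \<open>Lift \<open>\<Omega>\<close> to the open cone \<open>C \<subseteq> \<real>\<^sup>n - {0}\<close>; properness makes the closure of each of the two
  components of \<open>C\<close> a pointed convex cone.  Given an extreme point \<open>p\<close>, choose \<open>y\<^sub>m \<rightarrow> p\<close> in \<open>\<Omega>\<close>
  and, by cocompactness, \<open>y\<^sub>m = g\<^sub>m x\<^sub>m\<close> with \<open>g\<^sub>m \<in> G\<close> and \<open>x\<^sub>m\<close> in a compact subset of \<open>\<Omega>\<close>.  A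
  subsequence of \<open>g\<^sub>m / \<parallel>g\<^sub>m\<parallel>\<close> (with signs chosen to preserve one component) converges to a
  matrix \<open>h \<noteq> 0\<close>.  Pointedness shows that \<open>h\<close> does not vanish on \<open>C\<close>, and \<open>h x = p\<close> for
  \<open>x = lim x\<^sub>m\<close>.  If \<open>h\<close> did not map all of \<open>C\<close> into the line \<open>p\<close>, the image of a
  segment through \<open>x\<close> would be a nondegenerate segment of \<open>\<partial>\<Omega>\<close> with \<open>p\<close> in its interior,
  contradicting extremality; so \<open>h\<close> has image \<open>p\<close>.  Hence \<open>g\<^sub>m z \<rightarrow> p\<close> projectively whenever
  \<open>h z \<noteq> 0\<close>, which holds for \<open>z \<in> \<Omega>\<close>, and, when \<open>G\<close> is irreducible, for some \<open>\<gamma> z\<close> with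
  \<open>\<gamma> \<in> G\<close>, for every \<open>z \<noteq> 0\<close>.\<close>

section \<open>The projective topology\<close>

lemma span_singleton_eq_iff:
  fixes u v :: "'a::real_vector"
  assumes "u \<noteq> 0" "v \<noteq> 0"
  shows "span {u} = span {v} \<longleftrightarrow> (\<exists>c. c \<noteq> 0 \<and> u = c *\<^sub>R v)"
proof
  assume h: "span {u} = span {v}"
  have "u \<in> span {v}" using h span_base[of u "{u}"] by auto
  then obtain c where c: "u = c *\<^sub>R v" by (auto simp: span_singleton scaleR_conv_of_real)
  with assms have "c \<noteq> 0" by auto
  with c show "\<exists>c. c \<noteq> 0 \<and> u = c *\<^sub>R v" by blast
next
  assume "\<exists>c. c \<noteq> 0 \<and> u = c *\<^sub>R v"
  then obtain c where c: "c \<noteq> 0" "u = c *\<^sub>R v" by blast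
  have "u \<in> span {v}" using c(2) by (simp add: span_base span_scale)
  moreover have "inverse c *\<^sub>R u \<in> span {u}" by (intro span_scale span_base) simp
  then have "v \<in> span {u}" using c by simp
  ultimately show "span {u} = span {v}" by (simp add: span_eq)
qed

lemma span_singleton_scaleR:
  assumes "c \<noteq> 0" shows "span {c *\<^sub>R v} = span {v}"
proof (cases "v = 0")
  case False
  then show ?thesis using assms span_singleton_eq_iff[of "c *\<^sub>R v" v] by auto
qed simp

lemma openin_proj_top: "openin proj_top U \<longleftrightarrow> proj_open U"
  by (simp add: proj_top_def istopology_proj_open)

lemma proj_points_iff: "p \<in> proj_points \<longleftrightarrow> (\<exists>v. v \<noteq> 0 \<and> p = span {v})"
  by (auto simp: proj_points_def)

lemma topspace_proj_top: "topspace proj_top = proj_points"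
proof -
  have e: "{v. v \<noteq> 0 \<and> span {v} \<in> proj_points} = - {0}"
    by (auto simp: proj_points_def)
  have "proj_open proj_points"
    unfolding proj_open_def e by (simp add: open_Compl)
  moreover have "U \<subseteq> proj_points" if "proj_open U" for U
    using that by (simp add: proj_open_def)
  ultimately show ?thesis unfolding topspace_def openin_proj_top by blast
qed

lemma span_in_topspace_proj_top_iff: "span {v} \<in> topspace proj_top \<longleftrightarrow> v \<noteq> 0"
proof
  assume "span {v} \<in> topspace proj_top"
  then obtain u where "u \<noteq> 0" "span {v} = span {u}" by (auto simp: topspace_proj_top proj_points_iff)
  then show "v \<noteq> 0" using span_base[of u "{u}"] by auto
qed (auto simp: topspace_proj_top proj_points_iff)

lemma span_in_topspace_proj_top: "v \<noteq> 0 \<Longrightarrow> span {v} \<in> topspace proj_top"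
  by (simp add: span_in_topspace_proj_top_iff)

lemma proj_closure_ofE:
  assumes "p \<in> proj_top closure_of S"
  obtains v where "v \<noteq> 0" "p = span {v}"
proof -
  have "p \<in> proj_points"
    using assms closure_of_subset_topspace[of proj_top S] by (auto simp: topspace_proj_top)
  then show thesis using that by (auto simp: proj_points_iff)
qed

lemma span_in_image_iff:
  assumes "0 \<notin> Q" "\<And>v c. v \<in> Q \<Longrightarrow> c \<noteq> 0 \<Longrightarrow> c *\<^sub>R v \<in> Q" "v \<noteq> 0"
  shows "span {v} \<in> (\<lambda>v. span {v}) ` Q \<longleftrightarrow> v \<in> Q"
proof
  assume "span {v} \<in> (\<lambda>v. span {v}) ` Q"
  then obtain u where u: "u \<in> Q" "span {v} = span {u}" by auto
  have "u \<noteq> 0" using u assms(1) by auto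
  then obtain c where "c \<noteq> 0" "v = c *\<^sub>R u" using span_singleton_eq_iff[OF assms(3), of u] u by auto
  then show "v \<in> Q" using assms(2) u by auto
qed auto

lemma openin_proj_top_image_cone:
  fixes Q :: "(real^'n) set"
  assumes "open Q" "0 \<notin> Q" "\<And>v c. v \<in> Q \<Longrightarrow> c \<noteq> 0 \<Longrightarrow> c *\<^sub>R v \<in> Q"
  shows "openin proj_top ((\<lambda>v. span {v}) ` Q)"
proof -
  have "{v. v \<noteq> 0 \<and> span {v} \<in> (\<lambda>v. span {v}) ` Q} = Q"
    using span_in_image_iff[OF assms(2,3)] assms(2) by auto
  moreover have "(\<lambda>v. span {v}) ` Q \<subseteq> proj_points"
    using assms(2) by (auto simp: proj_points_def)
  ultimately show ?thesis using assms(1) by (simp add: openin_proj_top proj_open_def)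
qed

text \<open>It suffices to treat the saturation \<open>Q\<close> of \<open>U\<close>, a union of nonzero scalings of \<open>U\<close>.\<close>

lemma openin_proj_top_image:
  fixes U :: "(real^'n) set"
  assumes "open U" "0 \<notin> U"
  shows "openin proj_top ((\<lambda>u. span {u}) ` U)"
proof -
  define Q where "Q = (\<Union>c\<in>{c. c \<noteq> 0}. (\<lambda>u. c *\<^sub>R u) -` U) - {0}"
  have oQ: "open Q" unfolding Q_def
    by (intro open_Diff open_UN ballI continuous_open_vimage closed_singleton assms(1))
      (simp add: bounded_linear_scaleR_right linear_continuous_at)
  have sQ: "c *\<^sub>R u \<in> Q" if "u \<in> Q" "c \<noteq> 0" for u c
  proof -
    from that obtain d where "d \<noteq> 0" "d *\<^sub>R u \<in> U" "u \<noteq> 0" unfolding Q_def by auto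
    then have "(d / c) *\<^sub>R (c *\<^sub>R u) \<in> U" using that by simp
    then show ?thesis unfolding Q_def using \<open>d \<noteq> 0\<close> \<open>u \<noteq> 0\<close> that(2)
      by (intro DiffI UN_I[of "d / c"]) auto
  qed
  have eq: "(\<lambda>u. span {u}) ` U = (\<lambda>u. span {u}) ` Q"
  proof
    show "(\<lambda>u. span {u}) ` U \<subseteq> (\<lambda>u. span {u}) ` Q"
    proof
      fix p assume "p \<in> (\<lambda>u. span {u}) ` U"
      then obtain u where u: "u \<in> U" "p = span {u}" by blast
      then have "u \<in> Q" unfolding Q_def using assms(2) by (intro DiffI UN_I[of 1]) auto
      then show "p \<in> (\<lambda>u. span {u}) ` Q" using u by blast
    qed
  next
    show "(\<lambda>u. span {u}) ` Q \<subseteq> (\<lambda>u. span {u}) ` U"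
    proof
      fix p assume "p \<in> (\<lambda>u. span {u}) ` Q"
      then obtain u c where "c \<noteq> 0" "c *\<^sub>R u \<in> U" "p = span {u}" unfolding Q_def by auto
      then have "p = span {c *\<^sub>R u}" by (simp add: span_singleton_scaleR)
      with \<open>c *\<^sub>R u \<in> U\<close> show "p \<in> (\<lambda>u. span {u}) ` U" by blast
    qed
  qed
  show ?thesis
    unfolding eq by (rule openin_proj_top_image_cone[OF oQ _ sQ]) (simp add: Q_def)
qed

lemma span_in_proj_closure_iff:
  fixes v0 :: "real^'n"
  assumes "v0 \<noteq> 0"
  shows "span {v0} \<in> proj_top closure_of S \<longleftrightarrow> (\<forall>e>0. \<exists>u. u \<noteq> 0 \<and> span {u} \<in> S \<and> dist u v0 < e)"
proof
  assume h: "span {v0} \<in> proj_top closure_of S"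
  show "\<forall>e>0. \<exists>u. u \<noteq> 0 \<and> span {u} \<in> S \<and> dist u v0 < e"
  proof (intro allI impI)
    fix e :: real assume "e > 0"
    define U where "U = ball v0 e - {0}"
    have op: "openin proj_top ((\<lambda>u. span {u}) ` U)"
      unfolding U_def by (intro openin_proj_top_image) auto
    have "v0 \<in> U"
      using \<open>e > 0\<close> assms by (simp add: U_def)
    then have mem: "span {v0} \<in> (\<lambda>u. span {u}) ` U" by (rule imageI)
    have "\<forall>T. span {v0} \<in> T \<and> openin proj_top T \<longrightarrow> (\<exists>y\<in>S. y \<in> T)"
      using h by (simp add: closure_of_def)
    then have "\<exists>y\<in>S. y \<in> (\<lambda>u. span {u}) ` U"
      using mem op by (elim allE[of _ "(\<lambda>u. span {u}) ` U"]) simp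
    then obtain u where "u \<in> U" "span {u} \<in> S" by blast
    then show "\<exists>u. u \<noteq> 0 \<and> span {u} \<in> S \<and> dist u v0 < e"
      by (auto simp: U_def dist_commute)
  qed
next
  assume h: "\<forall>e>0. \<exists>u. u \<noteq> 0 \<and> span {u} \<in> S \<and> dist u v0 < e"
  show "span {v0} \<in> proj_top closure_of S"
    unfolding closure_of_def
  proof (intro CollectI conjI span_in_topspace_proj_top[OF assms] allI impI)
    fix T assume T: "span {v0} \<in> T \<and> openin proj_top T"
    then have "open {v. v \<noteq> 0 \<and> span {v} \<in> T}" by (simp add: openin_proj_top proj_open_def)
    moreover have "v0 \<in> {v. v \<noteq> 0 \<and> span {v} \<in> T}" using T assms by auto
    ultimately obtain e where e: "e > 0" "ball v0 e \<subseteq> {v. v \<noteq> 0 \<and> span {v} \<in> T}"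
      using open_contains_ball by blast
    then obtain u where "span {u} \<in> S" "dist u v0 < e" using h by blast
    moreover from \<open>dist u v0 < e\<close> have "u \<in> ball v0 e" by (simp add: dist_commute)
    ultimately show "\<exists>y\<in>S. y \<in> T" using e(2) by blast
  qed
qed

lemma continuous_map_proj_top:
  fixes f :: "real \<Rightarrow> real^'n"
  assumes "continuous_on UNIV f" "\<And>t. f t \<noteq> 0"
  shows "continuous_map euclideanreal proj_top (\<lambda>t. span {f t})"
  unfolding continuous_map_def
proof (intro conjI allI impI)
  show "(\<lambda>t. span {f t}) \<in> topspace euclideanreal \<rightarrow> topspace proj_top"
    using assms(2) by (auto intro: span_in_topspace_proj_top)
next
  fix U :: "(real^'n) set set" assume "openin proj_top U"
  then have "open {v. v \<noteq> 0 \<and> span {v} \<in> U}" by (simp add: openin_proj_top proj_open_def)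
  then have "open (f -` {v. v \<noteq> 0 \<and> span {v} \<in> U})"
    using assms(1) by (rule open_vimage)
  moreover have "{x \<in> topspace euclideanreal. span {f x} \<in> U} = f -` {v. v \<noteq> 0 \<and> span {v} \<in> U}"
    using assms(2) by auto
  ultimately show "openin euclideanreal {x \<in> topspace euclideanreal. span {f x} \<in> U}"
    by (simp only: open_openin)
qed

section \<open>Projective lines\<close>

definition indep2 :: "'a::real_vector \<Rightarrow> 'a \<Rightarrow> bool" where
  "indep2 x y \<longleftrightarrow> (\<forall>\<alpha> \<beta>. \<alpha> *\<^sub>R x + \<beta> *\<^sub>R y = 0 \<longrightarrow> \<alpha> = 0 \<and> \<beta> = 0)"

lemma indep2_nonzero: "indep2 x y \<Longrightarrow> x \<noteq> 0 \<and> y \<noteq> 0"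
  unfolding indep2_def by (metis add.right_neutral add_0 one_neq_zero scaleR_one scaleR_zero_left)

lemma not_indep2E:
  assumes "\<not> indep2 x y" "x \<noteq> 0" "y \<noteq> 0"
  obtains c where "c \<noteq> 0" "y = c *\<^sub>R x"
proof -
  from assms obtain \<alpha> \<beta> where ab: "\<alpha> *\<^sub>R x + \<beta> *\<^sub>R y = 0" "\<alpha> \<noteq> 0 \<or> \<beta> \<noteq> 0"
    unfolding indep2_def by blast
  have "\<beta> \<noteq> 0" using ab assms(2) by auto
  have "\<beta> *\<^sub>R y = (- \<alpha>) *\<^sub>R x" using ab(1) by (simp add: eq_neg_iff_add_eq_0 add.commute)
  then have "inverse \<beta> *\<^sub>R (\<beta> *\<^sub>R y) = inverse \<beta> *\<^sub>R ((- \<alpha>) *\<^sub>R x)" by simp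
  then have "y = (- \<alpha> / \<beta>) *\<^sub>R x" using \<open>\<beta> \<noteq> 0\<close> by (simp add: divide_inverse_commute)
  moreover have "- \<alpha> / \<beta> \<noteq> 0" using calculation assms(3) by auto
  ultimately show ?thesis using that by blast
qed

lemma indep2_if_add_notin_span:
  assumes "a \<noteq> 0" "a + b \<notin> span {a}"
  shows "indep2 a b"
proof (rule ccontr)
  assume ni: "\<not> indep2 a b"
  have "a + b \<in> span {a}"
  proof (cases "b = 0")
    case True then show ?thesis by (simp add: span_base)
  next
    case False
    then obtain c where "b = c *\<^sub>R a" using not_indep2E[OF ni assms(1)] by blast
    then have "a + b = (1 + c) *\<^sub>R a" by (simp add: algebra_simps)
    then show ?thesis by (simp add: span_base span_scale)
  qed
  then show False using assms(2) by blast
qed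

lemma in_span_pair_iff: "z \<in> span {x, y} \<longleftrightarrow> (\<exists>\<alpha> \<beta>. z = \<alpha> *\<^sub>R x + \<beta> *\<^sub>R y)"
proof
  assume "z \<in> span {x, y}"
  then obtain k where "z - k *\<^sub>R x \<in> span {y}" by (auto simp: span_insert)
  then obtain m where "z - k *\<^sub>R x = m *\<^sub>R y" by (auto simp: span_singleton scaleR_conv_of_real)
  then have "z = k *\<^sub>R x + m *\<^sub>R y" by (simp add: algebra_simps)
  then show "\<exists>\<alpha> \<beta>. z = \<alpha> *\<^sub>R x + \<beta> *\<^sub>R y" by blast
next
  assume "\<exists>\<alpha> \<beta>. z = \<alpha> *\<^sub>R x + \<beta> *\<^sub>R y"
  then obtain \<alpha> \<beta> where z: "z = \<alpha> *\<^sub>R x + \<beta> *\<^sub>R y" by blast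
  have "x \<in> span {x, y}" "y \<in> span {x, y}" by (auto intro: span_base)
  then show "z \<in> span {x, y}" unfolding z by (intro span_add span_scale)
qed

lemma combination_in_span_pair: "\<alpha> *\<^sub>R x + \<beta> *\<^sub>R y \<in> span {x, y}"
  by (auto simp: in_span_pair_iff)

definition line_through :: "'a::real_vector \<Rightarrow> 'a \<Rightarrow> 'a set set" where
  "line_through a b = {p \<in> {span {v} | v. v \<noteq> 0}. p \<subseteq> span {a, b}}"

lemma dim_span_pair: "indep2 a b \<Longrightarrow> dim (span {a::real^'n, b}) = 2"
proof -
  assume h: "indep2 a b"
  have nz: "a \<noteq> 0" "b \<noteq> 0" using indep2_nonzero[OF h] by auto
  have "a \<notin> span {b}"
  proof
    assume "a \<in> span {b}"
    then obtain k where "a = k *\<^sub>R b" by (auto simp: span_singleton scaleR_conv_of_real)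
    then have "1 *\<^sub>R a + (- k) *\<^sub>R b = 0" by simp
    then show False using h unfolding indep2_def by fastforce
  qed
  then have "a \<noteq> b" "independent {a, b}" using nz by (auto simp: independent_insert span_base)
  then show ?thesis by (simp add: dim_eq_card_independent)
qed

lemma line_through_in_proj_lines: "indep2 a b \<Longrightarrow> line_through (a::real^'n) b \<in> proj_lines"
  unfolding proj_lines_def line_through_def proj_points_def
  by (rule CollectI, rule exI[of _ "span {a, b}"]) (metis (no_types, lifting) dim_span_pair subspace_span)

lemma span_in_line_through_iff: "u \<noteq> 0 \<Longrightarrow> span {u} \<in> line_through a b \<longleftrightarrow> u \<in> span {a, b}"
proof -
  assume "u \<noteq> 0"
  have "span {u} \<subseteq> span {a, b}" if "u \<in> span {a, b}" using that by (intro span_minimal) auto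
  then show ?thesis unfolding line_through_def using \<open>u \<noteq> 0\<close> by (auto intro: span_base)
qed

lemma line_throughE:
  assumes "p \<in> line_through a b"
  obtains u where "u \<noteq> 0" "p = span {u}" "u \<in> span {a, b}"
  using assms unfolding line_through_def by (auto intro: span_base)

lemma line_through_subset_proj_points: "line_through a b \<subseteq> proj_points"
  unfolding line_through_def proj_points_def by auto

lemma closedin_line_through: "closedin proj_top (line_through (a::real^'n) b)"
proof -
  define Q where "Q = - span {a, b}"
  have "topspace proj_top - line_through a b = (\<lambda>v. span {v}) ` Q"
  proof (intro equalityI subsetI)
    fix p assume p: "p \<in> topspace proj_top - line_through a b"
    then obtain v where v: "v \<noteq> 0" "p = span {v}" by (auto simp: topspace_proj_top proj_points_iff)
    then have "v \<notin> span {a, b}" using p span_in_line_through_iff[OF v(1), of a b] by auto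
    then show "p \<in> (\<lambda>v. span {v}) ` Q" using v unfolding Q_def by blast
  next
    fix p assume "p \<in> (\<lambda>v. span {v}) ` Q"
    then obtain v where v: "v \<in> Q" "p = span {v}" by blast
    have "v \<noteq> 0" using v by (auto simp: Q_def span_zero)
    then show "p \<in> topspace proj_top - line_through a b"
      using v span_in_line_through_iff[of v a b] unfolding Q_def
      by (auto simp: topspace_proj_top proj_points_iff)
  qed
  moreover have "openin proj_top ((\<lambda>v. span {v}) ` Q)"
    unfolding Q_def by (rule openin_proj_top_image) (auto simp: span_zero closed_span open_Compl)
  moreover have "line_through a b \<subseteq> topspace proj_top"
    by (simp add: topspace_proj_top line_through_subset_proj_points)
  ultimately show ?thesis unfolding closedin_def by simp
qed

text \<open>The dual basis of an independent pair, extended to continuous linear forms on the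
  whole space via the Gram determinant \<open>D\<close>.\<close>

lemma indep2_coordinates:
  fixes x y :: "real^'n"
  assumes "indep2 x y"
  obtains f g where "linear f" "linear g" "continuous_on UNIV f" "continuous_on UNIV g"
    "\<And>\<alpha> \<beta>. f (\<alpha> *\<^sub>R x + \<beta> *\<^sub>R y) = \<alpha>" "\<And>\<alpha> \<beta>. g (\<alpha> *\<^sub>R x + \<beta> *\<^sub>R y) = \<beta>"
proof -
  define D where "D = (x \<bullet> x) * (y \<bullet> y) - (x \<bullet> y)^2"
  have "D \<noteq> 0"
  proof
    assume D0: "D = 0"
    define w where "w = (y \<bullet> y) *\<^sub>R x + (- (x \<bullet> y)) *\<^sub>R y"
    have "w \<bullet> w = (y \<bullet> y) * D"
      unfolding w_def D_def by (simp add: inner_add_left inner_add_right inner_commute algebra_simps power2_eq_square)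
    then have "w = 0" using D0 by simp
    then have "y \<bullet> y = 0" using assms unfolding indep2_def w_def by blast
    then show False using indep2_nonzero[OF assms] by simp
  qed
  define f where "f u = ((y \<bullet> y) * (x \<bullet> u) - (x \<bullet> y) * (y \<bullet> u)) / D" for u
  define g where "g u = ((x \<bullet> x) * (y \<bullet> u) - (x \<bullet> y) * (x \<bullet> u)) / D" for u
  have "linear f" unfolding f_def
    by (rule linearI) (simp_all add: inner_add_right algebra_simps add_divide_distrib diff_divide_distrib)
  moreover have "linear g" unfolding g_def
    by (rule linearI) (simp_all add: inner_add_right algebra_simps add_divide_distrib diff_divide_distrib)
  moreover have "continuous_on UNIV f" "continuous_on UNIV g"
    unfolding f_def g_def using \<open>D \<noteq> 0\<close> by (intro continuous_intros; simp)+
  moreover have "f (\<alpha> *\<^sub>R x + \<beta> *\<^sub>R y) = \<alpha>" for \<alpha> \<beta>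
  proof -
    have "(y \<bullet> y) * (x \<bullet> (\<alpha> *\<^sub>R x + \<beta> *\<^sub>R y)) - (x \<bullet> y) * (y \<bullet> (\<alpha> *\<^sub>R x + \<beta> *\<^sub>R y)) = \<alpha> * D"
      unfolding D_def by (simp add: inner_add_right inner_commute algebra_simps power2_eq_square)
    then show ?thesis unfolding f_def using \<open>D \<noteq> 0\<close> by simp
  qed
  moreover have "g (\<alpha> *\<^sub>R x + \<beta> *\<^sub>R y) = \<beta>" for \<alpha> \<beta>
  proof -
    have "(x \<bullet> x) * (y \<bullet> (\<alpha> *\<^sub>R x + \<beta> *\<^sub>R y)) - (x \<bullet> y) * (x \<bullet> (\<alpha> *\<^sub>R x + \<beta> *\<^sub>R y)) = \<beta> * D"
      unfolding D_def by (simp add: inner_add_right inner_commute algebra_simps power2_eq_square)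
    then show ?thesis unfolding g_def using \<open>D \<noteq> 0\<close> by simp
  qed
  ultimately show ?thesis using that by blast
qed

lemma indep2_add_scaleR_nonzero: "indep2 a b \<Longrightarrow> a + t *\<^sub>R b \<noteq> 0"
  unfolding indep2_def by (metis scaleR_one zero_neq_one)

lemma span_add_scaleR_in_line_through:
  "indep2 a b \<Longrightarrow> span {a + t *\<^sub>R b} \<in> line_through a b"
  using span_in_line_through_iff[OF indep2_add_scaleR_nonzero, of a b t a b]
    combination_in_span_pair[of 1 a t b]
  by simp

lemma connectedin_proj_arc:
  fixes a b :: "real^'n"
  assumes "indep2 a b" "connected I"
  shows "connectedin proj_top ((\<lambda>t. span {a + t *\<^sub>R b}) ` I)"
proof (rule connectedin_continuous_map_image)
  show "continuous_map euclideanreal proj_top (\<lambda>t. span {a + t *\<^sub>R b})"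
    using indep2_add_scaleR_nonzero[OF assms(1)]
    by (intro continuous_map_proj_top continuous_on_add continuous_on_const continuous_on_scaleR continuous_on_id)
  show "connectedin euclideanreal I" using assms(2) by simp
qed

text \<open>In the coordinates \<open>(f, g)\<close> of the plane, the arc is the cone \<open>lo f\<^sup>2 < f g < hi f\<^sup>2\<close>,
  an open neighbourhood of \<open>a\<close> invariant under nonzero scalars.\<close>

lemma span_in_interior_of_proj_arc:
  fixes a b :: "real^'n"
  assumes ab: "indep2 a b" and "lo < 0" "0 < hi"
  shows "span {a} \<in> (subtopology proj_top (line_through a b)) interior_of
           ((\<lambda>t. span {a + t *\<^sub>R b}) ` {lo<..<hi})"
proof -
  obtain f g where fg: "linear f" "linear g" "continuous_on UNIV f" "continuous_on UNIV g"
    "\<And>\<alpha> \<beta>. f (\<alpha> *\<^sub>R a + \<beta> *\<^sub>R b) = \<alpha>" "\<And>\<alpha> \<beta>. g (\<alpha> *\<^sub>R a + \<beta> *\<^sub>R b) = \<beta>"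
    using indep2_coordinates[OF ab] by blast
  have fs: "f (c *\<^sub>R u) = c * f u" "g (c *\<^sub>R u) = c * g u" for c u
    using linear_cmul[OF fg(1)] linear_cmul[OF fg(2)] by auto
  define Q where "Q = {u. 0 < f u * f u} \<inter> {u. lo * (f u * f u) < f u * g u} \<inter> {u. f u * g u < hi * (f u * f u)}"
  have oQ: "open Q" unfolding Q_def
    by (intro open_Int open_Collect_less continuous_intros fg(3,4))
  have zQ: "0 \<notin> Q" using linear_0[OF fg(1)] by (simp add: Q_def)
  have sQ: "c *\<^sub>R u \<in> Q" if "u \<in> Q" "c \<noteq> 0" for u c
  proof -
    have c2: "c * c > 0" using that(2) by (auto simp: zero_less_mult_iff linorder_neq_iff)
    have "0 < f u * f u" "lo * (f u * f u) < f u * g u" "f u * g u < hi * (f u * f u)"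
      using that(1) by (auto simp: Q_def)
    then have "0 < (c * c) * (f u * f u)"
      "(c * c) * (lo * (f u * f u)) < (c * c) * (f u * g u)"
      "(c * c) * (f u * g u) < (c * c) * (hi * (f u * f u))"
      using c2 by (simp_all add: mult_strict_left_mono)
    then show ?thesis unfolding Q_def by (simp add: fs algebra_simps)
  qed
  define T where "T = (\<lambda>u. span {u}) ` Q \<inter> line_through a b"
  have mQ: "span {u} \<in> (\<lambda>u. span {u}) ` Q \<longleftrightarrow> u \<in> Q" if "u \<noteq> 0" for u
    by (rule span_in_image_iff[OF zQ sQ that])
  have "openin (subtopology proj_top (line_through a b)) T"
    unfolding T_def openin_subtopology using openin_proj_top_image_cone[OF oQ zQ sQ] by blast
  moreover have "span {a} \<in> T"
  proof -
    have "f a = 1" "g a = 0" using fg(5)[of 1 0] fg(6)[of 1 0] by simp_all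
    then have "a \<in> Q" using assms by (simp add: Q_def)
    then show ?thesis unfolding T_def
      using mQ[OF indep2_nonzero[OF ab, THEN conjunct1]] span_add_scaleR_in_line_through[OF ab, of 0]
      by simp
  qed
  moreover have "T \<subseteq> (\<lambda>t. span {a + t *\<^sub>R b}) ` {lo<..<hi}"
  proof
    fix q assume "q \<in> T"
    then obtain u where u: "u \<noteq> 0" "q = span {u}" "u \<in> span {a, b}" "u \<in> Q"
      unfolding T_def using mQ by (auto elim!: line_throughE)
    obtain \<alpha> \<beta> where u2: "u = \<alpha> *\<^sub>R a + \<beta> *\<^sub>R b" using u(3) in_span_pair_iff[of u a b] by blast
    then have "f u = \<alpha>" "g u = \<beta>" using fg(5,6) by simp_all
    then have i: "0 < \<alpha> * \<alpha>" "lo * (\<alpha> * \<alpha>) < \<alpha> * \<beta>" "\<alpha> * \<beta> < hi * (\<alpha> * \<alpha>)"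
      using u(4) by (auto simp: Q_def)
    define t where "t = \<beta> / \<alpha>"
    have "\<alpha> \<noteq> 0" using i(1) by auto
    then have tt: "\<alpha> * \<beta> = t * (\<alpha> * \<alpha>)" by (simp add: t_def)
    have "lo * (\<alpha> * \<alpha>) < t * (\<alpha> * \<alpha>)" "t * (\<alpha> * \<alpha>) < hi * (\<alpha> * \<alpha>)"
      using i(2,3) by (simp_all only: tt[symmetric])
    then have "t \<in> {lo<..<hi}" using i(1) by (simp add: mult_less_cancel_right_pos)
    moreover have "u = \<alpha> *\<^sub>R (a + t *\<^sub>R b)" using u2 \<open>\<alpha> \<noteq> 0\<close> by (simp add: t_def algebra_simps)
    then have "q = span {a + t *\<^sub>R b}" using u(2) \<open>\<alpha> \<noteq> 0\<close> by (simp add: span_singleton_scaleR)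
    ultimately show "q \<in> (\<lambda>t. span {a + t *\<^sub>R b}) ` {lo<..<hi}" by blast
  qed
  ultimately show ?thesis unfolding interior_of_def by blast
qed

lemma proj_line_separated_by_two_points:
  fixes u1 u2 :: "real^'n"
  assumes "indep2 u1 u2"
  obtains E1 E2 where "openin proj_top E1" "openin proj_top E2" "E1 \<inter> E2 = {}"
    "\<And>\<alpha> \<beta>. \<alpha> * \<beta> > 0 \<Longrightarrow> span {\<alpha> *\<^sub>R u1 + \<beta> *\<^sub>R u2} \<in> E1"
    "\<And>\<alpha> \<beta>. \<alpha> * \<beta> < 0 \<Longrightarrow> span {\<alpha> *\<^sub>R u1 + \<beta> *\<^sub>R u2} \<in> E2"
proof -
  obtain f g where fg: "linear f" "linear g" "continuous_on UNIV f" "continuous_on UNIV g"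
    "\<And>\<alpha> \<beta>. f (\<alpha> *\<^sub>R u1 + \<beta> *\<^sub>R u2) = \<alpha>" "\<And>\<alpha> \<beta>. g (\<alpha> *\<^sub>R u1 + \<beta> *\<^sub>R u2) = \<beta>"
    using indep2_coordinates[OF assms] by blast
  have fgs: "f (c *\<^sub>R v) * g (c *\<^sub>R v) = c\<^sup>2 * (f v * g v)" for c v
    using linear_cmul[OF fg(1)] linear_cmul[OF fg(2)] by (simp add: power2_eq_square algebra_simps)
  have f0: "f 0 = 0" using linear_0[OF fg(1)] .
  define O1 where "O1 = {v. 0 < f v * g v}"
  define O2 where "O2 = {v. f v * g v < 0}"
  have oO: "open O1" "open O2" unfolding O1_def O2_def
    by (intro open_Collect_less continuous_intros fg(3,4))+
  have zO: "0 \<notin> O1" "0 \<notin> O2" using f0 by (auto simp: O1_def O2_def)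
  have s1: "c *\<^sub>R v \<in> O1" if "v \<in> O1" "c \<noteq> 0" for v c
    using that fgs by (auto simp: O1_def)
  have s2: "c *\<^sub>R v \<in> O2" if "v \<in> O2" "c \<noteq> 0" for v c
    using that fgs by (auto simp: O2_def mult_pos_neg)
  show ?thesis
  proof
    show "openin proj_top ((\<lambda>v. span {v}) ` O1)" by (rule openin_proj_top_image_cone[OF oO(1) zO(1) s1])
    show "openin proj_top ((\<lambda>v. span {v}) ` O2)" by (rule openin_proj_top_image_cone[OF oO(2) zO(2) s2])
    show "(\<lambda>v. span {v}) ` O1 \<inter> (\<lambda>v. span {v}) ` O2 = {}"
    proof (rule ccontr)
      assume "(\<lambda>v. span {v}) ` O1 \<inter> (\<lambda>v. span {v}) ` O2 \<noteq> {}"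
      then obtain v where "v \<in> O1" "span {v} \<in> (\<lambda>v. span {v}) ` O2" by blast
      moreover have "v \<noteq> 0" using \<open>v \<in> O1\<close> zO(1) by auto
      ultimately have "v \<in> O1" "v \<in> O2" using span_in_image_iff[OF zO(2) s2] by auto
      then show False by (simp add: O1_def O2_def)
    qed
    show "span {\<alpha> *\<^sub>R u1 + \<beta> *\<^sub>R u2} \<in> (\<lambda>v. span {v}) ` O1" if "\<alpha> * \<beta> > 0" for \<alpha> \<beta>
      using that fg(5,6) by (auto simp: O1_def)
    show "span {\<alpha> *\<^sub>R u1 + \<beta> *\<^sub>R u2} \<in> (\<lambda>v. span {v}) ` O2" if "\<alpha> * \<beta> < 0" for \<alpha> \<beta>
      using that fg(5,6) by (auto simp: O2_def)
  qed
qed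

text \<open>With \<open>\<Delta> = t\<^sub>2 (1 - t\<^sub>1) + t\<^sub>1 (1 - t\<^sub>2)\<close> one has \<open>\<Delta> a = t\<^sub>2 u\<^sub>1 + t\<^sub>1 u\<^sub>2\<close> and
  \<open>\<Delta> b = (1 - t\<^sub>2) u\<^sub>1 - (1 - t\<^sub>1) u\<^sub>2\<close>.\<close>

lemma indep2_segment_points_basis:
  fixes a b :: "'a::real_vector"
  assumes indab: "indep2 a b" and T1: "0 < t1" "t1 < 1" and T2: "0 < t2" "t2 < 1"
    and u1_def: "u1 = (1 - t1) *\<^sub>R a + t1 *\<^sub>R b" and u2_def: "u2 = (1 - t2) *\<^sub>R a + t2 *\<^sub>R (- b)"
  obtains A1 A2 B1 B2 where "indep2 u1 u2" "A1 > 0" "A2 > 0" "B1 * B2 < 0"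
    "a = A1 *\<^sub>R u1 + A2 *\<^sub>R u2" "b = B1 *\<^sub>R u1 + B2 *\<^sub>R u2"
proof -
  define \<Delta> where "\<Delta> = t2 * (1 - t1) + t1 * (1 - t2)"
  have \<Delta>: "\<Delta> > 0" unfolding \<Delta>_def using T1 T2 by (simp add: add_pos_pos)
  have comb: "\<alpha> *\<^sub>R u1 + \<beta> *\<^sub>R u2 = (\<alpha> * (1 - t1) + \<beta> * (1 - t2)) *\<^sub>R a + (\<alpha> * t1 - \<beta> * t2) *\<^sub>R b"
    for \<alpha> \<beta> unfolding u1_def u2_def by (simp add: algebra_simps)
  define A1 A2 B1 B2 where "A1 = t2 / \<Delta>" "A2 = t1 / \<Delta>" "B1 = (1 - t2) / \<Delta>" "B2 = - (1 - t1) / \<Delta>"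
  have A: "A1 > 0" "A2 > 0" and B: "B1 * B2 < 0"
    using \<Delta> T1 T2 by (auto simp: A1_A2_B1_B2_def mult_pos_neg divide_neg_pos)
  have "A1 * (1 - t1) + A2 * (1 - t2) = (t2 * (1 - t1) + t1 * (1 - t2)) / \<Delta>"
    "B1 * t1 - B2 * t2 = ((1 - t2) * t1 + (1 - t1) * t2) / \<Delta>"
    using \<Delta> unfolding A1_A2_B1_B2_def by (simp_all add: field_simps)
  then have "A1 * (1 - t1) + A2 * (1 - t2) = 1" "B1 * t1 - B2 * t2 = 1"
    using \<Delta> unfolding \<Delta>_def by (simp_all add: algebra_simps)
  moreover have "A1 * t1 - A2 * t2 = 0" "B1 * (1 - t1) + B2 * (1 - t2) = 0"
    using \<Delta> unfolding A1_A2_B1_B2_def by (simp_all add: field_simps)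
  ultimately have "a = A1 *\<^sub>R u1 + A2 *\<^sub>R u2" "b = B1 *\<^sub>R u1 + B2 *\<^sub>R u2"
    by (simp_all add: comb)
  moreover have "indep2 u1 u2" unfolding indep2_def
  proof (intro allI impI)
    fix \<alpha> \<beta> assume "\<alpha> *\<^sub>R u1 + \<beta> *\<^sub>R u2 = 0"
    then have e1: "\<alpha> * (1 - t1) + \<beta> * (1 - t2) = 0" and e2: "\<alpha> * t1 - \<beta> * t2 = 0"
      using indab unfolding comb indep2_def by blast+
    have "\<alpha> * \<Delta> = t2 * (\<alpha> * (1 - t1) + \<beta> * (1 - t2)) + (1 - t2) * (\<alpha> * t1 - \<beta> * t2)"
      "\<beta> * \<Delta> = t1 * (\<alpha> * (1 - t1) + \<beta> * (1 - t2)) - (1 - t1) * (\<alpha> * t1 - \<beta> * t2)"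
      unfolding \<Delta>_def by (simp_all add: algebra_simps)
    then have "\<alpha> * \<Delta> = 0" "\<beta> * \<Delta> = 0" by (simp_all only: e1 e2 mult_zero_right add_0 diff_0)
    then show "\<alpha> = 0 \<and> \<beta> = 0" using \<Delta> by simp
  qed
  ultimately show ?thesis using that A B by blast
qed

lemma segment_subset_open_perturb:
  fixes a d :: "'a::euclidean_space"
  assumes "open U" "\<forall>t\<in>{0..1::real}. (1 - t) *\<^sub>R a + t *\<^sub>R d \<in> U"
  shows "\<exists>e>0. \<forall>d'. dist d' d < e \<longrightarrow> (\<forall>t\<in>{0..1::real}. (1 - t) *\<^sub>R a + t *\<^sub>R d' \<in> U)"
proof -
  define K where "K = (\<lambda>t. (1 - t) *\<^sub>R a + t *\<^sub>R d) ` {0..1::real}"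
  have "compact K" unfolding K_def
    by (intro compact_continuous_image compact_Icc continuous_intros)
  moreover have "K \<subseteq> U" using assms(2) unfolding K_def by blast
  ultimately obtain e where e: "e > 0" "(\<Union>x\<in>K. ball x e) \<subseteq> U"
    using compact_subset_open_imp_ball_epsilon_subset assms(1) by metis
  show ?thesis
  proof (intro exI[of _ e] conjI e(1) allI impI ballI)
    fix d' t assume d': "dist d' d < e" and t: "t \<in> {0..1::real}"
    have "dist ((1 - t) *\<^sub>R a + t *\<^sub>R d) ((1 - t) *\<^sub>R a + t *\<^sub>R d') = t * dist d d'"
    proof -
      have "(1 - t) *\<^sub>R a + t *\<^sub>R d - ((1 - t) *\<^sub>R a + t *\<^sub>R d') = t *\<^sub>R (d - d')"
        by (simp add: algebra_simps)
      then show ?thesis using t by (simp add: dist_norm)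
    qed
    also have "\<dots> \<le> dist d d'" using t by (simp add: mult_left_le_one_le)
    also have "\<dots> < e" using d' by (simp add: dist_commute)
    finally have "(1 - t) *\<^sub>R a + t *\<^sub>R d' \<in> ball ((1 - t) *\<^sub>R a + t *\<^sub>R d) e" by simp
    moreover have "(1 - t) *\<^sub>R a + t *\<^sub>R d \<in> K" using t unfolding K_def by blast
    ultimately show "(1 - t) *\<^sub>R a + t *\<^sub>R d' \<in> U" using e(2) by blast
  qed
qed

lemma norm_scaleR_divide_norm_plus_one_less:
  fixes x :: "'a::real_normed_vector"
  assumes "e > 0" shows "norm ((e / (norm x + 1)) *\<^sub>R x) < e"
proof -
  have p: "norm x + 1 > 0" by (simp add: add_nonneg_pos)
  have "e * norm x < e * (norm x + 1)" using assms by simp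
  then show ?thesis using p assms by (simp add: pos_divide_less_eq)
qed

section \<open>The cone over a properly convex domain\<close>

locale proper_convex_domain =
  fixes \<Omega> :: "(real^'n) set set"
  assumes open_domain: "openin proj_top \<Omega>" and convex_domain: "proj_convex \<Omega>"
    and proper_domain: "proj_proper \<Omega>"
begin

definition C :: "(real^'n) set" where "C = {v. v \<noteq> 0 \<and> span {v} \<in> \<Omega>}"

lemma open_C: "open C"
  using open_domain unfolding openin_proj_top proj_open_def C_def by simp

lemma C_nonzero: "v \<in> C \<Longrightarrow> v \<noteq> 0" by (simp add: C_def)

lemma scaleR_in_C: assumes "v \<in> C" "c \<noteq> 0" shows "c *\<^sub>R v \<in> C"
  using assms by (simp add: C_def span_singleton_scaleR)

lemma scaleR_in_C_iff: "c \<noteq> 0 \<Longrightarrow> c *\<^sub>R v \<in> C \<longleftrightarrow> v \<in> C"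
  using scaleR_in_C[of "c *\<^sub>R v" "inverse c"] scaleR_in_C[of v c] by auto

lemma uminus_in_C: "v \<in> C \<Longrightarrow> - v \<in> C"
  using scaleR_in_C[of v "-1"] by simp

lemma domain_subset_proj_points: "\<Omega> \<subseteq> proj_points"
  using convex_domain by (simp add: proj_convex_def)

lemma domain_memE:
  assumes "x \<in> \<Omega>"
  obtains v where "v \<in> C" "x = span {v}"
proof -
  have "x \<in> proj_points" using assms domain_subset_proj_points by blast
  then obtain v where "v \<noteq> 0" "x = span {v}" unfolding proj_points_iff by blast
  then show thesis using that assms by (simp add: C_def)
qed

text \<open>\<open>C\<close> has two connected components \<open>\<pm>C\<^sub>0\<close>, and \<open>joinable a b\<close> says that \<open>a\<close>, \<open>b\<close> lie
  in the same one.  For a fixed \<open>k \<in> C\<close> the set \<open>{v. joinable k v}\<close> is the open convex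
  cone \<open>C\<^sub>0\<close>, and properness makes its closure pointed.\<close>

definition joinable :: "real^'n \<Rightarrow> real^'n \<Rightarrow> bool" where
  "joinable a b \<longleftrightarrow> (\<forall>t\<in>{0..1::real}. (1 - t) *\<^sub>R a + t *\<^sub>R b \<in> C)"

lemma joinable_in_C: "joinable a b \<Longrightarrow> a \<in> C \<and> b \<in> C"
proof -
  assume "joinable a b"
  then have "(1 - t) *\<^sub>R a + t *\<^sub>R b \<in> C" if "t \<in> {0, 1}" for t
    using that unfolding joinable_def by auto
  from this[of 0] this[of 1] show ?thesis by simp
qed

lemma joinable_sym: "joinable a b \<Longrightarrow> joinable b a"
  unfolding joinable_def
proof (intro ballI)
  fix t :: real assume h: "\<forall>t\<in>{0..1}. (1 - t) *\<^sub>R a + t *\<^sub>R b \<in> C" and t: "t \<in> {0..1}"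
  have "1 - t \<in> {0..1}" using t by auto
  from h[rule_format, OF this] show "(1 - t) *\<^sub>R b + t *\<^sub>R a \<in> C" by (simp add: add.commute)
qed

lemma joinable_scaleR_pos:
  assumes "v \<in> C" "c > 0" shows "joinable v (c *\<^sub>R v)"
  unfolding joinable_def
proof
  fix t :: real assume t: "t \<in> {0..1}"
  have "1 - t + t * c > 0"
    using t assms(2) by (cases "t = 1") (auto simp: add_pos_nonneg)
  then have "(1 - t + t * c) *\<^sub>R v \<in> C" using scaleR_in_C assms by simp
  then show "(1 - t) *\<^sub>R v + t *\<^sub>R (c *\<^sub>R v) \<in> C" by (simp add: algebra_simps)
qed

lemma joinable_refl: "v \<in> C \<Longrightarrow> joinable v v"
  using joinable_scaleR_pos[of v 1] by simp

lemma joinable_nhd: "joinable a b \<Longrightarrow> \<exists>e>0. \<forall>b'. dist b' b < e \<longrightarrow> joinable a b'"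
  unfolding joinable_def using segment_subset_open_perturb[OF open_C] by blast

lemma joinable_uminus: "joinable a b \<Longrightarrow> joinable (- a) (- b)"
  unfolding joinable_def
proof
  fix t :: real assume "\<forall>t\<in>{0..1}. (1 - t) *\<^sub>R a + t *\<^sub>R b \<in> C" "t \<in> {0..1}"
  then have "- ((1 - t) *\<^sub>R a + t *\<^sub>R b) \<in> C" by (blast intro: uminus_in_C)
  then show "(1 - t) *\<^sub>R (- a) + t *\<^sub>R (- b) \<in> C" by (simp add: algebra_simps)
qed

lemma joinable_both_signs_combination:
  assumes "joinable a b" "joinable a (- b)" "\<alpha> > 0"
  shows "\<alpha> *\<^sub>R a + \<beta> *\<^sub>R b \<in> C"
proof -
  define s where "s = \<alpha> + \<bar>\<beta>\<bar>"
  have s: "s > 0" using assms(3) by (simp add: s_def)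
  define t where "t = \<bar>\<beta>\<bar> / s"
  have t: "t \<in> {0..1}" using s by (auto simp: t_def s_def assms(3) less_imp_le)
  have st1: "s * (1 - t) = \<alpha>" using s by (simp add: t_def s_def field_simps)
  have st2: "s * t = \<bar>\<beta>\<bar>" using s by (simp add: t_def)
  show ?thesis
  proof (cases "\<beta> \<ge> 0")
    case True
    have "(1 - t) *\<^sub>R a + t *\<^sub>R b \<in> C" using assms(1) t by (simp add: joinable_def)
    then have "s *\<^sub>R ((1 - t) *\<^sub>R a + t *\<^sub>R b) \<in> C" using scaleR_in_C s by simp
    moreover have "s *\<^sub>R ((1 - t) *\<^sub>R a + t *\<^sub>R b) = \<alpha> *\<^sub>R a + \<beta> *\<^sub>R b"
      using True st1 st2 by (simp add: scaleR_add_right)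
    ultimately show ?thesis by simp
  next
    case False
    have "(1 - t) *\<^sub>R a + t *\<^sub>R (- b) \<in> C" using assms(2) t by (simp add: joinable_def)
    then have "s *\<^sub>R ((1 - t) *\<^sub>R a + t *\<^sub>R (- b)) \<in> C" using scaleR_in_C s by simp
    moreover have "s *\<^sub>R ((1 - t) *\<^sub>R a + t *\<^sub>R (- b)) = \<alpha> *\<^sub>R a + \<beta> *\<^sub>R b"
      using False st1 st2 by (simp add: scaleR_diff_right flip: st1)
    ultimately show ?thesis by simp
  qed
qed

text \<open>Otherwise \<open>C\<close> would contain the whole plane through \<open>a\<close>, \<open>b\<close> (minus \<open>0\<close>), i.e.\ \<open>\<Omega>\<close> a
  whole projective line.\<close>

lemma not_joinable_both_signs:
  assumes "joinable a b" "joinable a (- b)"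
  shows False
proof (cases "indep2 a b")
  case True
  have "line_through a b \<subseteq> \<Omega>"
  proof
    fix p assume "p \<in> line_through a b"
    then obtain u where u: "u \<noteq> 0" "p = span {u}" "u \<in> span {a, b}" by (rule line_throughE)
    then obtain \<alpha> \<beta> where u2: "u = \<alpha> *\<^sub>R a + \<beta> *\<^sub>R b" by (auto simp: in_span_pair_iff)
    consider "\<alpha> > 0" | "\<alpha> < 0" | "\<alpha> = 0" by linarith
    then have "u \<in> C"
    proof cases
      case 1 then show ?thesis using joinable_both_signs_combination[OF assms] u2 by simp
    next
      case 2
      then have "(- \<alpha>) *\<^sub>R a + (- \<beta>) *\<^sub>R b \<in> C" by (intro joinable_both_signs_combination[OF assms]) simp
      then have "- u \<in> C" using u2 by (simp add: algebra_simps)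
      then show ?thesis using uminus_in_C by fastforce
    next
      case 3
      then have "\<beta> \<noteq> 0" using u u2 by auto
      then show ?thesis using scaleR_in_C joinable_in_C[OF assms(1)] u2 3 by simp
    qed
    then show "p \<in> \<Omega>" using u by (simp add: C_def)
  qed
  then show False
    using convex_domain line_through_in_proj_lines[OF True] unfolding proj_convex_def by blast
next
  case False
  have ab: "a \<in> C" "b \<in> C" using joinable_in_C[OF assms(1)] by auto
  then obtain c where c: "c \<noteq> 0" "b = c *\<^sub>R a" using not_indep2E[OF False] C_nonzero by metis
  show False
  proof (cases "c > 0")
    case True
    define t where "t = 1 / (1 + c)"
    have "t \<in> {0..1}" using True by (auto simp: t_def)
    then have "(1 - t) *\<^sub>R a + t *\<^sub>R (- b) \<in> C" using assms(2) by (simp add: joinable_def)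
    moreover have "(1 - t) *\<^sub>R a + t *\<^sub>R (- b) = 0"
      using True c(2) by (simp add: t_def algebra_simps field_simps)
    ultimately show False using C_nonzero by fastforce
  next
    case False
    then have cn: "c < 0" using c by simp
    define t where "t = 1 / (1 - c)"
    have "t \<in> {0..1}" using cn by (auto simp: t_def)
    then have "(1 - t) *\<^sub>R a + t *\<^sub>R b \<in> C" using assms(1) by (simp add: joinable_def)
    moreover have "(1 - t) *\<^sub>R a + t *\<^sub>R b = 0"
      using cn c(2) by (simp add: t_def algebra_simps field_simps)
    ultimately show False using C_nonzero by fastforce
  qed
qed

text \<open>If neither segment lies in \<open>C\<close>, pick \<open>u\<^sub>1 \<in> [a, b] - C\<close> and \<open>u\<^sub>2 \<in> [a, -b] - C\<close>: the
  points \<open>[u\<^sub>1]\<close>, \<open>[u\<^sub>2]\<close> separate \<open>[a]\<close> from \<open>[b]\<close> on the line through them, contradicting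
  the connectedness of its intersection with \<open>\<Omega>\<close>.\<close>

lemma joinable_or_joinable_uminus:
  assumes aC: "a \<in> C" and bC: "b \<in> C"
  shows "joinable a b \<or> joinable a (- b)"
proof (rule ccontr)
  assume nn: "\<not> (joinable a b \<or> joinable a (- b))"
  then obtain t1 where t1: "t1 \<in> {0..1}" "(1 - t1) *\<^sub>R a + t1 *\<^sub>R b \<notin> C"
    unfolding joinable_def by blast
  obtain t2 where t2: "t2 \<in> {0..1}" "(1 - t2) *\<^sub>R a + t2 *\<^sub>R (- b) \<notin> C"
    using nn unfolding joinable_def by blast
  show False
  proof (cases "indep2 a b")
    case False
    then obtain c where c: "c \<noteq> 0" "b = c *\<^sub>R a" using not_indep2E C_nonzero aC bC by metis
    then have "joinable a b \<or> joinable a (- b)"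
      using joinable_scaleR_pos[OF aC, of c] joinable_scaleR_pos[OF aC, of "- c"] by (cases "c > 0") auto
    then show False using nn by blast
  next
    case indab: True
    define u1 where "u1 = (1 - t1) *\<^sub>R a + t1 *\<^sub>R b"
    define u2 where "u2 = (1 - t2) *\<^sub>R a + t2 *\<^sub>R (- b)"
    have T1: "0 < t1" "t1 < 1" using t1 aC bC by (auto simp: less_le)
    have T2: "0 < t2" "t2 < 1" using t2 aC bC uminus_in_C by (auto simp: less_le)
    obtain A1 A2 B1 B2 where ind12: "indep2 u1 u2" and A: "A1 > 0" "A2 > 0" and B: "B1 * B2 < 0"
      and ea: "a = A1 *\<^sub>R u1 + A2 *\<^sub>R u2" and eb: "b = B1 *\<^sub>R u1 + B2 *\<^sub>R u2"
      using indep2_segment_points_basis[OF indab T1 T2 u1_def u2_def] by blast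
    obtain E1 E2 where E: "openin proj_top E1" "openin proj_top E2" "E1 \<inter> E2 = {}"
      "\<And>\<alpha> \<beta>. \<alpha> * \<beta> > 0 \<Longrightarrow> span {\<alpha> *\<^sub>R u1 + \<beta> *\<^sub>R u2} \<in> E1"
      "\<And>\<alpha> \<beta>. \<alpha> * \<beta> < 0 \<Longrightarrow> span {\<alpha> *\<^sub>R u1 + \<beta> *\<^sub>R u2} \<in> E2"
      using proj_line_separated_by_two_points[OF ind12] by blast
    define S where "S = line_through a b \<inter> \<Omega>"
    have "S \<subseteq> E1 \<union> E2"
    proof
      fix p assume "p \<in> S"
      then obtain u where u: "u \<noteq> 0" "p = span {u}" "u \<in> span {a, b}" "u \<in> C"
        unfolding S_def C_def by (auto elim: line_throughE)
      then obtain \<alpha> \<beta> where "u = \<alpha> *\<^sub>R a + \<beta> *\<^sub>R b" by (auto simp: in_span_pair_iff)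
      then have u12: "u = (\<alpha> * A1 + \<beta> * B1) *\<^sub>R u1 + (\<alpha> * A2 + \<beta> * B2) *\<^sub>R u2"
        unfolding ea eb by (simp add: algebra_simps)
      have "u1 \<notin> C" "u2 \<notin> C" using t1 t2 by (simp_all add: u1_def u2_def)
      then have "\<alpha> * A1 + \<beta> * B1 \<noteq> 0" "\<alpha> * A2 + \<beta> * B2 \<noteq> 0"
        using u12 u(1,4) by (auto simp: scaleR_in_C_iff)
      then show "p \<in> E1 \<union> E2"
        using E(4,5) u(2) u12 by (metis UnI1 UnI2 linorder_neqE_linordered_idom mult_eq_0_iff)
    qed
    moreover have "span {a} \<in> E1 \<inter> S" "span {b} \<in> E2 \<inter> S"
      using E(4)[of A1 A2] E(5)[of B1 B2] A B aC bC span_in_line_through_iff[OF C_nonzero]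
      by (auto simp: S_def C_def ea[symmetric] eb[symmetric] intro: span_base)
    moreover have "connectedin proj_top S"
      using convex_domain line_through_in_proj_lines[OF indab] unfolding proj_convex_def S_def by blast
    ultimately show False using E(1-3) unfolding connectedin by blast
  qed
qed

lemma joinable_trans:
  assumes ab: "joinable a b" and bc: "joinable b c"
  shows "joinable a c"
proof -
  define d where "d s = (1 - s) *\<^sub>R b + s *\<^sub>R c" for s
  have dC: "d s \<in> C" if "s \<in> {0..1}" for s using bc that by (simp add: joinable_def d_def)
  have aC: "a \<in> C" using joinable_in_C[OF ab] by simp
  define N where "N = norm (c - b) + 1"
  have N: "N > 0" unfolding N_def by (simp add: add_nonneg_pos)
  have close: "dist (d y) (d s0) < e" if "e > 0" "dist y s0 < e / N" for e y s0
  proof -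
    have "d y - d s0 = (y - s0) *\<^sub>R (c - b)" unfolding d_def by (simp add: algebra_simps)
    then have "dist (d y) (d s0) \<le> \<bar>y - s0\<bar> * N"
      unfolding N_def by (simp add: dist_norm mult_left_mono)
    also have "\<dots> < e" using that N by (simp add: dist_real_def pos_less_divide_eq)
    finally show ?thesis .
  qed
  text \<open>Both \<open>joinable a (d s)\<close> and its negation are open conditions in \<open>s\<close>, by
    \<open>joinable_or_joinable_uminus\<close> and \<open>not_joinable_both_signs\<close>.\<close>
  have locally_constant: "\<exists>T. openin (top_of_set {0..1}) T \<and> s0 \<in> T \<and>
      (\<forall>x\<in>T. \<forall>y\<in>T. joinable a (d x) \<longrightarrow> joinable a (d y))"
    if s0: "s0 \<in> {0..1::real}" for s0
  proof -
    have T: "openin (top_of_set {0..1}) ({0..1} \<inter> ball s0 r)" "s0 \<in> {0..1} \<inter> ball s0 r"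
      if "r > 0" for r :: real
      using s0 that by auto
    from joinable_or_joinable_uminus[OF aC dC[OF s0]] show ?thesis
    proof
      assume "joinable a (d s0)"
      then obtain e where e: "e > 0" "\<And>Y. dist Y (d s0) < e \<Longrightarrow> joinable a Y"
        using joinable_nhd by blast
      have "\<forall>y\<in>{0..1} \<inter> ball s0 (e / N). joinable a (d y)"
        using e close by (auto simp: dist_commute)
      then show ?thesis using T[of "e / N"] e N by (intro exI[of _ "{0..1} \<inter> ball s0 (e / N)"]) auto
    next
      assume "joinable a (- d s0)"
      then obtain e where e: "e > 0" "\<And>Y. dist Y (- d s0) < e \<Longrightarrow> joinable a Y"
        using joinable_nhd by blast
      have "\<forall>y\<in>{0..1} \<inter> ball s0 (e / N). joinable a (- d y)"
      proof
        fix y assume "y \<in> {0..1} \<inter> ball s0 (e / N)"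
        then have "dist (d y) (d s0) < e" using e close by (auto simp: dist_commute)
        then have "dist (- d y) (- d s0) < e" by (simp add: dist_norm norm_minus_commute)
        then show "joinable a (- d y)" using e by blast
      qed
      then have "\<forall>y\<in>{0..1} \<inter> ball s0 (e / N). \<not> joinable a (d y)"
        using not_joinable_both_signs by blast
      then show ?thesis using T[of "e / N"] e N by (intro exI[of _ "{0..1} \<inter> ball s0 (e / N)"]) auto
    qed
  qed
  have "joinable a (d 1)"
    by (rule connected_induction_simple[where S="{0..1::real}" and a=0 and P="\<lambda>s. joinable a (d s)"])
      (use ab locally_constant in \<open>auto simp: d_def\<close>)
  then show ?thesis by (simp add: d_def)
qed

lemma joinable_scaleR: "joinable k v \<Longrightarrow> c > 0 \<Longrightarrow> joinable k (c *\<^sub>R v)"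
  by (meson joinable_in_C joinable_scaleR_pos joinable_trans)

lemma joinable_convex_combination:
  assumes "joinable k a" "joinable k b" "t \<in> {0..1}"
  shows "joinable k ((1 - t) *\<^sub>R a + t *\<^sub>R b)"
proof -
  have "joinable a ((1 - t) *\<^sub>R a + t *\<^sub>R b)"
    unfolding joinable_def
  proof
    fix s :: real assume s: "s \<in> {0..1}"
    have "s * t \<in> {0..1}" using s assms(3) by (auto simp: mult_le_one)
    moreover have "joinable a b" using joinable_trans[OF joinable_sym[OF assms(1)] assms(2)] .
    ultimately have "(1 - s * t) *\<^sub>R a + (s * t) *\<^sub>R b \<in> C" by (simp add: joinable_def)
    then show "(1 - s) *\<^sub>R a + s *\<^sub>R ((1 - t) *\<^sub>R a + t *\<^sub>R b) \<in> C" by (simp add: algebra_simps)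
  qed
  with assms(1) show ?thesis by (rule joinable_trans)
qed

lemma joinable_add:
  assumes "joinable k a" "joinable k b" shows "joinable k (a + b)"
proof -
  have "joinable k ((1 - 1/2) *\<^sub>R a + (1/2) *\<^sub>R b)"
    by (rule joinable_convex_combination[OF assms]) simp
  then have "joinable k (2 *\<^sub>R ((1 - 1/2) *\<^sub>R a + (1/2) *\<^sub>R b))" by (rule joinable_scaleR) simp
  then show ?thesis by (simp add: algebra_simps)
qed

lemma joinable_add_closure:
  assumes a: "joinable k a" and b: "b \<in> closure {v. joinable k v}" shows "joinable k (a + b)"
proof -
  obtain e where e: "e > 0" "\<And>Y. dist Y a < e \<Longrightarrow> joinable k Y" using joinable_nhd[OF a] by blast
  obtain w where w: "joinable k w" "dist w b < e" using b e(1) unfolding closure_approachable by blast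
  have "dist (a + b - w) a < e" using w(2) by (simp add: dist_norm norm_minus_commute)
  then have "joinable k (a + b - w)" using e by blast
  then have "joinable k ((a + b - w) + w)" using joinable_add w(1) by blast
  then show ?thesis by simp
qed

lemma joinable_add_scaleR_closure:
  assumes k: "k \<in> C" and w: "w \<in> closure {v. joinable k v}" and t: "t \<ge> 0"
  shows "joinable k (k + t *\<^sub>R w)"
proof (cases "t = 0")
  case True then show ?thesis using joinable_refl[OF k] by simp
next
  case False
  then have t: "t > 0" using t by simp
  have "joinable k ((1 / t) *\<^sub>R k + w)"
    using joinable_add_closure[OF joinable_scaleR[OF joinable_refl[OF k], of "1/t"] w] t by simp
  then have "joinable k (t *\<^sub>R ((1 / t) *\<^sub>R k + w))" using joinable_scaleR t by blast
  then show ?thesis using t by (simp add: algebra_simps)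
qed

lemma line_through_subset_closure:
  assumes "indep2 k w" and line: "\<And>t. k + t *\<^sub>R w \<in> C"
  shows "line_through k w \<subseteq> proj_top closure_of (line_through k w \<inter> \<Omega>)"
proof
  fix p assume "p \<in> line_through k w"
  then obtain u where u: "u \<noteq> 0" "p = span {u}" "u \<in> span {k, w}" by (rule line_throughE)
  then obtain \<alpha> \<beta> where u2: "u = \<alpha> *\<^sub>R k + \<beta> *\<^sub>R w" using in_span_pair_iff[of u k w] by blast
  have wnz: "w \<noteq> 0" using indep2_nonzero[OF assms(1)] by simp
  show "p \<in> proj_top closure_of (line_through k w \<inter> \<Omega>)"
  proof (cases "\<alpha> = 0")
    case False
    have "\<alpha> *\<^sub>R (k + (\<beta> / \<alpha>) *\<^sub>R w) \<in> C" using scaleR_in_C[OF line False] .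
    then have "u \<in> C" using False u2 by (simp add: algebra_simps)
    then have "p \<in> line_through k w \<inter> \<Omega>" using u \<open>p \<in> line_through k w\<close> by (simp add: C_def)
    moreover have "line_through k w \<inter> \<Omega> \<subseteq> topspace proj_top"
      using domain_subset_proj_points by (auto simp: topspace_proj_top)
    ultimately show ?thesis using closure_of_subset by blast
  next
    case True
    text \<open>\<open>[w]\<close> is the limit of \<open>[\<epsilon> k + w]\<close> as \<open>\<epsilon> \<rightarrow> 0\<close>.\<close>
    then have "p = span {w}" using u u2 by (simp add: span_singleton_scaleR)
    moreover have "\<exists>u'. u' \<noteq> 0 \<and> span {u'} \<in> line_through k w \<inter> \<Omega> \<and> dist u' w < e" if "e > 0" for e
    proof -
      define \<epsilon> where "\<epsilon> = e / (norm k + 1)"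
      have \<epsilon>: "\<epsilon> > 0" using that by (simp add: \<epsilon>_def add_nonneg_pos)
      have "\<epsilon> *\<^sub>R (k + (1 / \<epsilon>) *\<^sub>R w) \<in> C" using scaleR_in_C[OF line] \<epsilon> by simp
      then have uC: "\<epsilon> *\<^sub>R k + w \<in> C" using \<epsilon> by (simp add: algebra_simps)
      then have "span {\<epsilon> *\<^sub>R k + w} \<in> line_through k w \<inter> \<Omega>"
        using span_in_line_through_iff[OF C_nonzero[OF uC]] combination_in_span_pair[of \<epsilon> k 1 w]
        by (simp add: C_def)
      moreover have "dist (\<epsilon> *\<^sub>R k + w) w < e"
        using norm_scaleR_divide_norm_plus_one_less[OF that, of k] by (simp add: dist_norm \<epsilon>_def)
      ultimately show ?thesis using C_nonzero[OF uC] by blast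
    qed
    ultimately show ?thesis using span_in_proj_closure_iff[OF wnz] by blast
  qed
qed

text \<open>If \<open>\<pm>w\<close> both lie in the closed cone, then \<open>k + \<real> w \<subseteq> C\<close>, so the closure of \<open>\<Omega>\<close> would
  contain the whole line through \<open>[k]\<close> and \<open>[w]\<close>.\<close>

lemma closure_joinable_pointed:
  assumes kC: "k \<in> C" and w1: "w \<in> closure {v. joinable k v}" and w2: "- w \<in> closure {v. joinable k v}"
  shows "w = 0"
proof (rule ccontr)
  assume wnz: "w \<noteq> 0"
  have line: "k + t *\<^sub>R w \<in> C" for t
  proof (cases "t \<ge> 0")
    case True then show ?thesis using joinable_add_scaleR_closure[OF kC w1] joinable_in_C by blast
  next
    case False
    then have "joinable k (k + (- t) *\<^sub>R (- w))" by (intro joinable_add_scaleR_closure[OF kC w2]) simp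
    then show ?thesis using joinable_in_C by simp
  qed
  show False
  proof (cases "indep2 k w")
    case False
    then obtain c where c: "c \<noteq> 0" "w = c *\<^sub>R k" using not_indep2E C_nonzero[OF kC] wnz by metis
    have "k + (- 1 / c) *\<^sub>R w = 0" using c by simp
    then show False using line[of "- 1 / c"] C_nonzero by fastforce
  next
    case True
    have "proj_top closure_of (line_through k w \<inter> \<Omega>) \<subseteq> line_through k w"
      by (rule closure_of_minimal) (auto simp: closedin_line_through)
    with line_through_subset_closure[OF True line]
    have "proj_top closure_of (line_through k w \<inter> \<Omega>) = line_through k w" by blast
    then show False
      using proper_domain line_through_in_proj_lines[OF True] unfolding proj_proper_def by blast
  qed
qed

end

section \<open>Matrices acting on lines\<close>

lemma tendsto_matrix_vector_mult:
  fixes A :: "'a \<Rightarrow> real^'n^'m"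
  assumes "(A \<longlongrightarrow> h) F" "(x \<longlongrightarrow> x0) F"
  shows "((\<lambda>n. A n *v x n) \<longlongrightarrow> h *v x0) F"
proof (rule vec_tendstoI)
  fix i
  have "((\<lambda>n. \<Sum>j\<in>UNIV. A n $ i $ j * x n $ j) \<longlongrightarrow> (\<Sum>j\<in>UNIV. h $ i $ j * x0 $ j)) F"
    by (intro tendsto_sum tendsto_mult tendsto_vec_nth assms)
  then show "((\<lambda>n. (A n *v x n) $ i) \<longlongrightarrow> (h *v x0) $ i) F"
    by (simp add: matrix_vector_mult_def)
qed

text \<open>Proportionality is a closed condition on pairs of vectors, which lets us pass
  \<open>span {x\<^sub>n} = span {y\<^sub>n}\<close> to the limit.\<close>

definition proportional :: "real^'n \<Rightarrow> real^'n \<Rightarrow> bool" where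
  "proportional a b \<longleftrightarrow> (\<forall>i j. a $ i * b $ j = a $ j * b $ i)"

lemma proportional_iff_in_span:
  assumes "b \<noteq> 0" shows "proportional a b \<longleftrightarrow> a \<in> span {b}"
proof
  assume h: "proportional a b"
  obtain i where i: "b $ i \<noteq> 0" using assms by (metis vec_eq_iff zero_index)
  have "a = (a $ i / b $ i) *\<^sub>R b"
  proof (subst vec_eq_iff, intro allI)
    fix j
    have "a $ j * b $ i = a $ i * b $ j" using h unfolding proportional_def by metis
    then show "a $ j = ((a $ i / b $ i) *\<^sub>R b) $ j" using i by (simp add: field_simps)
  qed
  then show "a \<in> span {b}" by (metis span_base span_scale singletonI)
next
  assume "a \<in> span {b}"
  then obtain c where "a = c *\<^sub>R b" by (auto simp: span_singleton scaleR_conv_of_real)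
  then show "proportional a b" unfolding proportional_def by simp
qed

lemma proportional_limit:
  assumes "\<And>n. proportional (a n) (b n)" "a \<longlonglongrightarrow> a0" "b \<longlonglongrightarrow> b0"
  shows "proportional a0 b0"
  unfolding proportional_def
proof (intro allI)
  fix i j
  have "(\<lambda>n. a n $ i * b n $ j) \<longlonglongrightarrow> a0 $ i * b0 $ j" by (intro tendsto_intros assms)
  moreover have "(\<lambda>n. a n $ j * b n $ i) \<longlonglongrightarrow> a0 $ j * b0 $ i" by (intro tendsto_intros assms)
  moreover have "(\<lambda>n. a n $ j * b n $ i) = (\<lambda>n. a n $ i * b n $ j)"
    using assms(1) unfolding proportional_def by metis
  ultimately show "a0 $ i * b0 $ j = a0 $ j * b0 $ i" using LIMSEQ_unique by metis
qed

lemma span_eq_iff_proportional: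
  assumes "a \<noteq> 0" "b \<noteq> 0" shows "span {a} = span {b} \<longleftrightarrow> proportional a b"
proof
  assume "span {a} = span {b}"
  then have "a \<in> span {b}" using span_base[of a "{a}"] by simp
  then show "proportional a b" using proportional_iff_in_span[OF assms(2)] by simp
next
  assume "proportional a b"
  then obtain c where c: "a = c *\<^sub>R b" using proportional_iff_in_span[OF assms(2)]
    by (auto simp: span_singleton scaleR_conv_of_real)
  then show "span {a} = span {b}" using assms by (simp add: span_singleton_scaleR)
qed

lemma span_eq_limit:
  fixes a b :: "nat \<Rightarrow> real^'n"
  assumes "\<And>n. span {a n} = span {b n}" "\<And>n. a n \<noteq> 0" "\<And>n. b n \<noteq> 0"
    "a \<longlonglongrightarrow> a0" "b \<longlonglongrightarrow> b0" "a0 \<noteq> 0" "b0 \<noteq> 0"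
  shows "span {a0} = span {b0}"
  using proportional_limit[of a b a0 b0] assms span_eq_iff_proportional by metis

lemma matrix_vector_mult_uminus_right: "(A :: real^'n^'m) *v (- v) = - (A *v v)"
  using matrix_vector_mult_scaleR[of A "-1" v] by simp

lemma matrix_mul_matrix_inv: "invertible A \<Longrightarrow> A ** matrix_inv A = mat 1"
  unfolding invertible_def matrix_inv_def by (metis (mono_tags, lifting) someI_ex)

lemma proj_act_span: "proj_act A (span {v}) = span {A *v v}"
proof -
  have "(\<lambda>v. A *v v) ` span {v} = span ((\<lambda>v. A *v v) ` {v})"
    by (rule span_linear_image[symmetric]) simp
  then show ?thesis by (simp add: proj_act_def)
qed

lemma invertible_mult_vec_nonzero: "invertible (A::real^'n^'n) \<Longrightarrow> x \<noteq> 0 \<Longrightarrow> A *v x \<noteq> 0"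
  using inj_matrix_vector_mult[of A] by (metis injD matrix_vector_mult_0_right)

lemma invertible_nonzero: "invertible (A::real^'n^'n) \<Longrightarrow> A \<noteq> 0"
  using invertible_mult_vec_nonzero[of A 1] by auto

lemma matrix_image_subset_of_open:
  fixes h :: "real^'n^'m"
  assumes "open U" "k \<in> U" "\<And>v. v \<in> U \<Longrightarrow> h *v v \<in> S" "subspace S"
  shows "h *v u \<in> S"
proof -
  obtain e where e: "e > 0" "ball k e \<subseteq> U" using assms(1,2) open_contains_ball by blast
  define \<delta> where "\<delta> = e / (norm u + 1)"
  have \<delta>: "\<delta> > 0" using e by (simp add: \<delta>_def add_nonneg_pos)
  have "k + \<delta> *\<^sub>R u \<in> ball k e"
    using norm_scaleR_divide_norm_plus_one_less[OF e(1), of u] by (simp add: dist_norm \<delta>_def)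
  then have "h *v (k + \<delta> *\<^sub>R u) - h *v k \<in> S"
    using assms(2-4) e(2) by (blast intro: subspace_diff)
  then have "(1 / \<delta>) *\<^sub>R (h *v (k + \<delta> *\<^sub>R u) - h *v k) \<in> S"
    using assms(4) subspace_scale by blast
  moreover have "(1 / \<delta>) *\<^sub>R (h *v (k + \<delta> *\<^sub>R u) - h *v k) = h *v u"
    using \<delta> by (simp add: algebra_simps)
  ultimately show ?thesis by simp
qed

section \<open>Limits of normalised automorphisms\<close>

context proper_convex_domain
begin

lemma limit_maps_into_closure_joinable:
  assumes M: "\<And>n v. joinable k v \<Longrightarrow> joinable k (M n *v v)" and lim: "M \<longlonglongrightarrow> h"
    and x: "joinable k x"
  shows "h *v x \<in> closure {v. joinable k v}"
proof -
  have "(\<lambda>n. M n *v x) \<longlonglongrightarrow> h *v x" by (rule tendsto_matrix_vector_mult[OF lim tendsto_const])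
  moreover have "\<forall>n. M n *v x \<in> {v. joinable k v}" using M x by blast
  ultimately show ?thesis unfolding closure_sequential by (intro exI[of _ "\<lambda>n. M n *v x"] conjI)
qed

text \<open>A nonzero limit cannot vanish at a point of \<open>C\<close>: it would map a neighbourhood of that
  point, hence a neighbourhood of \<open>0\<close> in its image, into the pointed closed cone.\<close>

lemma limit_nonzero_on_C:
  assumes kC: "k \<in> C" and M: "\<And>n v. joinable k v \<Longrightarrow> joinable k (M n *v v)" and lim: "M \<longlonglongrightarrow> h"
    and "h \<noteq> 0" and vC: "v \<in> C"
  shows "h *v v \<noteq> 0"
proof
  assume hv: "h *v v = 0"
  obtain v' where v': "joinable k v'" "h *v v' = 0"
  proof (cases "joinable k v")
    case True then show ?thesis using that hv by blast
  next
    case False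
    then have "joinable k (- v)" using joinable_or_joinable_uminus[OF kC vC] by blast
    moreover have "h *v (- v) = 0" using hv by (simp add: matrix_vector_mult_uminus_right)
    ultimately show ?thesis using that by blast
  qed
  obtain e where e: "e > 0" "\<And>Y. dist Y v' < e \<Longrightarrow> joinable k Y" using joinable_nhd[OF v'(1)] by blast
  have "h *v u = 0" for u
  proof -
    define \<delta> where "\<delta> = e / (norm u + 1)"
    have \<delta>: "\<delta> > 0" using e by (simp add: \<delta>_def add_nonneg_pos)
    have small: "norm (\<delta> *\<^sub>R u) < e"
      unfolding \<delta>_def by (rule norm_scaleR_divide_norm_plus_one_less[OF e(1)])
    have "joinable k (v' + \<delta> *\<^sub>R u)" "joinable k (v' - \<delta> *\<^sub>R u)"
      using e(2) small by (simp_all add: dist_norm)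
    moreover have "h *v (v' + \<delta> *\<^sub>R u) = \<delta> *\<^sub>R (h *v u)" "h *v (v' - \<delta> *\<^sub>R u) = - (\<delta> *\<^sub>R (h *v u))"
      using v'(2) by (simp_all add: algebra_simps)
    ultimately have "\<delta> *\<^sub>R (h *v u) \<in> closure {v. joinable k v}" "- (\<delta> *\<^sub>R (h *v u)) \<in> closure {v. joinable k v}"
      using limit_maps_into_closure_joinable[OF M lim] by metis+
    then have "\<delta> *\<^sub>R (h *v u) = 0" by (rule closure_joinable_pointed[OF kC])
    then show "h *v u = 0" using \<delta> by simp
  qed
  then have "h = 0" by (simp add: matrix_eq)
  then show False using \<open>h \<noteq> 0\<close> by simp
qed

lemma joinable_if_in_closure:
  assumes kC: "k \<in> C" and zC: "z \<in> C" and z: "z \<in> closure {v. joinable k v}"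
  shows "joinable k z"
proof (rule ccontr)
  assume "\<not> joinable k z"
  then have "joinable k (- z)" using joinable_or_joinable_uminus[OF kC zC] by blast
  from joinable_add_closure[OF this z] have "joinable k 0" by simp
  then show False using joinable_in_C C_nonzero by blast
qed

lemma span_in_closure_domain:
  assumes "z \<in> closure {v. joinable k v}" "z \<noteq> 0"
  shows "span {z} \<in> proj_top closure_of \<Omega>"
  unfolding span_in_proj_closure_iff[OF assms(2)]
proof (intro allI impI)
  fix e :: real assume "e > 0"
  then obtain y where "joinable k y" "dist y z < e"
    using assms(1) unfolding closure_approachable by blast
  then show "\<exists>u. u \<noteq> 0 \<and> span {u} \<in> \<Omega> \<and> dist u z < e"
    using joinable_in_C by (auto simp: C_def)
qed

lemma scaleR_in_closure_joinable:
  assumes "y \<in> closure {v. joinable k v}" "c > 0"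
  shows "c *\<^sub>R y \<in> closure {v. joinable k v}"
proof -
  have "(*\<^sub>R) c ` {v. joinable k v} \<subseteq> {v. joinable k v}"
    using assms(2) joinable_scaleR by auto
  then show ?thesis using assms closure_scaleR[of c "{v. joinable k v}"] closure_mono by blast
qed

text \<open>Since the closed cone is convex, a point of the open cone on a segment of the closed
  cone pushes every interior point of that segment into the open cone.\<close>

lemma joinable_of_closure_segment:
  assumes z: "joinable k (x + t *\<^sub>R y)"
    and lo: "x + lo *\<^sub>R y \<in> closure {v. joinable k v}" and hi: "x + hi *\<^sub>R y \<in> closure {v. joinable k v}"
    and "lo < t" "t < hi" "lo < 0" "0 < hi"
  shows "joinable k x"
proof -
  consider "t = 0" | "t > 0" | "t < 0" by linarith
  then show ?thesis
  proof cases
    case 1 then show ?thesis using z by simp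
  next
    case 2
    define \<alpha> \<beta> where "\<alpha> = - lo / (t - lo)" and "\<beta> = t / (t - lo)"
    have "\<alpha> > 0" "\<beta> > 0" using 2 \<open>lo < 0\<close> by (simp_all add: \<alpha>_def \<beta>_def divide_pos_pos divide_neg_pos)
    have j: "joinable k (\<alpha> *\<^sub>R (x + t *\<^sub>R y) + \<beta> *\<^sub>R (x + lo *\<^sub>R y))"
      by (intro joinable_add_closure joinable_scaleR[OF z] scaleR_in_closure_joinable[OF lo]) fact+
    have d: "t - lo \<noteq> 0" using 2 \<open>lo < 0\<close> by simp
    have "\<alpha> + \<beta> = 1" using d by (simp add: \<alpha>_def \<beta>_def diff_divide_distrib[symmetric])
    moreover have "\<alpha> * t + \<beta> * lo = 0" using d by (simp add: \<alpha>_def \<beta>_def field_simps)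
    ultimately have "\<alpha> *\<^sub>R (x + t *\<^sub>R y) + \<beta> *\<^sub>R (x + lo *\<^sub>R y) = x"
      by (simp add: algebra_simps flip: scaleR_add_left)
    with j show ?thesis by simp
  next
    case 3
    define \<alpha> \<beta> where "\<alpha> = hi / (hi - t)" and "\<beta> = - t / (hi - t)"
    have "\<alpha> > 0" "\<beta> > 0" using 3 \<open>0 < hi\<close> by (simp_all add: \<alpha>_def \<beta>_def divide_pos_pos divide_neg_pos)
    have j: "joinable k (\<alpha> *\<^sub>R (x + t *\<^sub>R y) + \<beta> *\<^sub>R (x + hi *\<^sub>R y))"
      by (intro joinable_add_closure joinable_scaleR[OF z] scaleR_in_closure_joinable[OF hi]) fact+
    have d: "hi - t \<noteq> 0" using 3 \<open>0 < hi\<close> by simp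
    have "\<alpha> + \<beta> = 1" using d by (simp add: \<alpha>_def \<beta>_def diff_divide_distrib[symmetric])
    moreover have "\<alpha> * t + \<beta> * hi = 0" using d by (simp add: \<alpha>_def \<beta>_def field_simps)
    ultimately have "\<alpha> *\<^sub>R (x + t *\<^sub>R y) + \<beta> *\<^sub>R (x + hi *\<^sub>R y) = x"
      by (simp add: algebra_simps flip: scaleR_add_left)
    with j show ?thesis by simp
  qed
qed

lemma frontier_domain_iff: "p \<in> proj_top frontier_of \<Omega> \<longleftrightarrow> p \<in> proj_top closure_of \<Omega> \<and> p \<notin> \<Omega>"
  using interior_of_openin[OF open_domain] by (simp add: frontier_of_def)

lemma proj_arc_in_frontier:
  assumes kC: "k \<in> C" and ab: "indep2 a b" and a: "span {a} \<in> proj_top frontier_of \<Omega>"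
    and cl: "\<And>t. t \<in> {lo..hi} \<Longrightarrow> a + t *\<^sub>R b \<in> closure {v. joinable k v}"
    and "lo < 0" "0 < hi"
  shows "(\<lambda>t. span {a + t *\<^sub>R b}) ` {lo<..<hi} \<subseteq> proj_top frontier_of \<Omega>"
proof
  fix q assume "q \<in> (\<lambda>t. span {a + t *\<^sub>R b}) ` {lo<..<hi}"
  then obtain t where t: "t \<in> {lo<..<hi}" "q = span {a + t *\<^sub>R b}" by blast
  have z: "a + t *\<^sub>R b \<in> closure {v. joinable k v}" "a + t *\<^sub>R b \<noteq> 0"
    using cl[of t] t(1) indep2_add_scaleR_nonzero[OF ab] by auto
  have "q \<notin> \<Omega>"
  proof
    assume "q \<in> \<Omega>"
    then have "a + t *\<^sub>R b \<in> C" using t(2) z(2) by (simp add: C_def)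
    then have "joinable k (a + t *\<^sub>R b)" using joinable_if_in_closure[OF kC _ z(1)] by blast
    then have "joinable k a"
      using cl[of lo] cl[of hi] t(1) assms(5,6) by (intro joinable_of_closure_segment[of k a t b lo hi]) auto
    then have "span {a} \<in> \<Omega>" using joinable_in_C by (simp add: C_def)
    with a show False by (simp add: frontier_domain_iff)
  qed
  then show "q \<in> proj_top frontier_of \<Omega>"
    using span_in_closure_domain[OF z] t(2) by (simp add: frontier_domain_iff)
qed

lemma joinable_segment_extension:
  assumes k': "joinable k k'" and v: "joinable k v"
  obtains \<epsilon> where "\<epsilon> > 0" "\<And>t. t \<in> {-\<epsilon>..1} \<Longrightarrow> joinable k (k' + t *\<^sub>R (v - k'))"
proof -
  define w where "w = v - k'"
  obtain e where e: "e > 0" "\<And>Y. dist Y k' < e \<Longrightarrow> joinable k Y" using joinable_nhd[OF k'] by blast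
  define \<epsilon> where "\<epsilon> = e / (norm w + 1)"
  have \<epsilon>: "\<epsilon> > 0" using e by (simp add: \<epsilon>_def add_nonneg_pos)
  have "norm (\<epsilon> *\<^sub>R w) < e" unfolding \<epsilon>_def by (rule norm_scaleR_divide_norm_plus_one_less[OF e(1)])
  then have kme: "joinable k (k' - \<epsilon> *\<^sub>R w)" using e(2) by (simp add: dist_norm)
  have "joinable k (k' + t *\<^sub>R w)" if t: "t \<in> {-\<epsilon>..1}" for t
  proof (cases "t \<ge> 0")
    case True
    then have "t \<in> {0..1}" using t by simp
    from joinable_convex_combination[OF k' v this] show ?thesis by (simp add: w_def algebra_simps)
  next
    case False
    define s where "s = - t / \<epsilon>"
    have "s \<in> {0..1}" using t False \<epsilon> by (auto simp: s_def field_simps)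
    from joinable_convex_combination[OF k' kme this]
    have "joinable k ((1 - s) *\<^sub>R k' + s *\<^sub>R (k' - \<epsilon> *\<^sub>R w))" .
    moreover have "(1 - s) *\<^sub>R k' + s *\<^sub>R (k' - \<epsilon> *\<^sub>R w) = k' + t *\<^sub>R w"
      using \<epsilon> by (simp add: s_def algebra_simps)
    ultimately show ?thesis by simp
  qed
  with \<epsilon> show ?thesis using that unfolding w_def by blast
qed

text \<open>If \<open>h v\<close> left the line \<open>[h k']\<close>, then for small \<open>\<epsilon>\<close> the matrix \<open>h\<close> would map the
  segment \<open>k' + [-\<epsilon>, 1] (v - k')\<close> onto a segment of the closed cone whose open part
  projects into \<open>\<partial>\<Omega>\<close> and contains \<open>[h k']\<close> in its relative interior.\<close>

lemma limit_image_in_extreme_line: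
  assumes kC: "k \<in> C" and M: "\<And>n v. joinable k v \<Longrightarrow> joinable k (M n *v v)" and lim: "M \<longlonglongrightarrow> h"
    and k': "joinable k k'" and v: "joinable k v"
    and ext: "span {h *v k'} \<in> proj_Ext \<Omega>"
  shows "h *v v \<in> span {h *v k'}"
proof (rule ccontr)
  define a b where "a = h *v k'" and "b = h *v (v - k')"
  assume "h *v v \<notin> span {h *v k'}"
  moreover have "h *v v = a + b" by (simp add: a_def b_def algebra_simps)
  moreover have "a \<noteq> 0"
    using ext frontier_of_subset_topspace span_in_topspace_proj_top_iff
    unfolding proj_Ext_def a_def by blast
  ultimately have indab: "indep2 a b" using indep2_if_add_notin_span by (simp add: a_def)
  obtain \<epsilon> where \<epsilon>: "\<epsilon> > 0" and seg: "\<And>t. t \<in> {-\<epsilon>..1} \<Longrightarrow> joinable k (k' + t *\<^sub>R (v - k'))"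
    using joinable_segment_extension[OF k' v] by blast
  have clz: "a + t *\<^sub>R b \<in> closure {v. joinable k v}" if "t \<in> {-\<epsilon>..1}" for t
    using limit_maps_into_closure_joinable[OF M lim seg[OF that]]
    by (simp add: a_def b_def algebra_simps)
  define S where "S = (\<lambda>t. span {a + t *\<^sub>R b}) ` {-\<epsilon><..<1}"
  have "span {a} \<in> proj_top frontier_of \<Omega>" using ext by (simp add: proj_Ext_def a_def)
  then have "S \<subseteq> proj_top frontier_of \<Omega>"
    unfolding S_def using clz \<epsilon> by (intro proj_arc_in_frontier[OF kC indab]) auto
  moreover have "S \<subseteq> line_through a b" unfolding S_def using span_add_scaleR_in_line_through[OF indab] by blast
  moreover have "connectedin proj_top S" unfolding S_def by (rule connectedin_proj_arc[OF indab]) simp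
  moreover have "span {a} \<in> (subtopology proj_top (line_through a b)) interior_of S"
    unfolding S_def by (rule span_in_interior_of_proj_arc[OF indab]) (use \<epsilon> in auto)
  ultimately show False
    using ext line_through_in_proj_lines[OF indab] unfolding proj_Ext_def a_def by blast
qed

lemma limit_maps_C_into_extreme_line:
  assumes kC: "k \<in> C" and M: "\<And>n v. joinable k v \<Longrightarrow> joinable k (M n *v v)" and lim: "M \<longlonglongrightarrow> h"
    and k': "joinable k k'" and ext: "span {h *v k'} \<in> proj_Ext \<Omega>" and vC: "v \<in> C"
  shows "h *v v \<in> span {h *v k'}"
proof (cases "joinable k v")
  case True
  show ?thesis using limit_image_in_extreme_line[OF kC M lim k' True ext] .
next
  case False
  then have "joinable k (- v)" using joinable_or_joinable_uminus[OF kC vC] by blast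
  then have "h *v - v \<in> span {h *v k'}" using limit_image_in_extreme_line[OF kC M lim k' _ ext] by blast
  then have "- (h *v v) \<in> span {h *v k'}" by (simp add: matrix_vector_mult_uminus_right)
  then show ?thesis using span_neg by fastforce
qed

lemma compactin_domain_lift:
  assumes K: "compactin proj_top K" "K \<subseteq> \<Omega>"
  obtains Kv where "compact Kv" "Kv \<subseteq> C" "\<And>q. q \<in> K \<Longrightarrow> \<exists>v\<in>Kv. q = span {v}"
proof -
  define I where "I = {(v, r). r > 0 \<and> cball v r \<subseteq> C}"
  define f where "f = (\<lambda>(v::real^'n, r::real). (\<lambda>u. span {u}) ` ball v r)"
  have "\<forall>E\<in>f ` I. openin proj_top E"
  proof
    fix E assume "E \<in> f ` I"
    then obtain v r where vr: "(v, r) \<in> I" "E = (\<lambda>u. span {u}) ` ball v r" unfolding f_def by auto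
    have "ball v r \<subseteq> C" using vr(1) ball_subset_cball unfolding I_def by blast
    then have "0 \<notin> ball v r" using C_nonzero by blast
    then show "openin proj_top E" unfolding vr(2) by (intro openin_proj_top_image) auto
  qed
  moreover have "K \<subseteq> \<Union>(f ` I)"
  proof
    fix q assume "q \<in> K"
    then obtain v where v: "v \<in> C" "q = span {v}" using K(2) domain_memE by blast
    then obtain r where r: "r > 0" "ball v r \<subseteq> C" using open_C open_contains_ball by blast
    then have "(v, r / 2) \<in> I" unfolding I_def using subset_trans[OF cball_subset_ball_iff[THEN iffD2]] by auto
    moreover have "q \<in> f (v, r / 2)" using v r by (simp add: f_def)
    ultimately show "q \<in> \<Union>(f ` I)" by blast
  qed
  ultimately obtain F where F: "finite F" "F \<subseteq> f ` I" "K \<subseteq> \<Union>F"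
    using K(1) unfolding compactin_def by meson
  obtain F' where F': "F' \<subseteq> I" "finite F'" "F = f ` F'"
    using finite_subset_image[OF F(1) F(2)] by blast
  define Kv where "Kv = (\<Union>x\<in>F'. cball (fst x) (snd x))"
  show ?thesis
  proof
    show "compact Kv" unfolding Kv_def using F'(2) by (intro compact_UN) auto
    show "Kv \<subseteq> C" using F'(1) unfolding Kv_def I_def by fastforce
    show "\<exists>v\<in>Kv. q = span {v}" if q: "q \<in> K" for q
    proof -
      obtain x where x: "x \<in> F'" "q \<in> f x" using F(3) F'(3) q by blast
      obtain u where "u \<in> ball (fst x) (snd x)" "q = span {u}" using x(2) unfolding f_def by auto
      moreover have "u \<in> Kv" using x(1) \<open>u \<in> ball _ _\<close> unfolding Kv_def by force
      ultimately show ?thesis by blast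
    qed
  qed
qed

lemma domain_closure_sequence:
  assumes "span {p0} \<in> proj_top closure_of \<Omega>" "p0 \<noteq> 0"
  obtains y where "\<And>m. y m \<in> C" "y \<longlonglongrightarrow> p0"
proof -
  have "\<forall>m::nat. \<exists>y. y \<in> C \<and> dist y p0 < 1 / (real m + 1)"
    using assms unfolding span_in_proj_closure_iff[OF assms(2)] by (auto simp: C_def)
  then obtain y where y: "\<And>m. y m \<in> C" "\<And>m. dist (y m) p0 < 1 / (real m + 1)" by metis
  have "y \<longlonglongrightarrow> p0"
  proof (rule metric_LIMSEQ_I)
    fix e :: real assume "e > 0"
    then obtain N where N: "N > 0" "inverse (real N) < e" using ex_inverse_of_nat_less by blast
    have "dist (y n) p0 < e" if "n \<ge> N" for n
    proof -
      have "1 / (real n + 1) \<le> inverse (real N)"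
        using that N(1) by (simp add: inverse_eq_divide frac_le)
      then show ?thesis using y(2)[of n] N(2) by linarith
    qed
    then show "\<exists>no. \<forall>n\<ge>no. dist (y n) p0 < e" by blast
  qed
  with y(1) show ?thesis using that by blast
qed

end

locale proper_convex_domain_group = proper_convex_domain \<Omega> for \<Omega> :: "(real^'n) set set" +
  fixes G :: "(real^'n^'n) set"
  assumes group: "matrix_group G" and automorphisms: "in_Aut G \<Omega>"
begin

lemma group_invertible: "A \<in> G \<Longrightarrow> invertible A"
  using group by (simp add: matrix_group_def)

lemma group_mult_vec_in_C: assumes "A \<in> G" "v \<in> C" shows "A *v v \<in> C"
proof -
  have "proj_act A (span {v}) \<in> \<Omega>" using automorphisms assms unfolding in_Aut_def C_def by blast
  moreover have "A *v v \<noteq> 0" using invertible_mult_vec_nonzero[OF group_invertible] assms C_nonzero by blast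
  ultimately show ?thesis by (simp add: proj_act_span C_def)
qed

lemma joinable_group_mult: assumes "A \<in> G" "joinable a b" shows "joinable (A *v a) (A *v b)"
  unfolding joinable_def
proof
  fix t :: real assume "t \<in> {0..1}"
  then have "A *v ((1 - t) *\<^sub>R a + t *\<^sub>R b) \<in> C"
    using assms group_mult_vec_in_C by (simp add: joinable_def)
  then show "(1 - t) *\<^sub>R (A *v a) + t *\<^sub>R (A *v b) \<in> C" by (simp add: algebra_simps)
qed

lemma group_sign_preserves_component:
  assumes kC: "k \<in> C" and A: "A \<in> G"
  obtains \<sigma> :: real where "\<sigma> = 1 \<or> \<sigma> = -1" "\<And>v. joinable k v \<Longrightarrow> joinable k (\<sigma> *\<^sub>R (A *v v))"
proof -
  from joinable_or_joinable_uminus[OF kC group_mult_vec_in_C[OF A kC]] show ?thesis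
  proof
    assume "joinable k (A *v k)"
    then show ?thesis using that[of 1] joinable_trans joinable_group_mult[OF A] by simp
  next
    assume "joinable k (- (A *v k))"
    then show ?thesis using that[of "-1"] joinable_trans joinable_uminus joinable_group_mult[OF A] by simp
  qed
qed

lemma normalized_subsequence_limit:
  fixes x :: "nat \<Rightarrow> 'a::metric_space"
  assumes kC: "k \<in> C" and gG: "\<And>m. g m \<in> G" and Kv: "compact Kv" "\<And>m. x m \<in> Kv"
  obtains r c h x0 where "strict_mono r" "\<And>n. c n \<noteq> 0" "h \<noteq> 0" "x0 \<in> Kv"
    "\<And>n v. joinable k v \<Longrightarrow> joinable k (c n *\<^sub>R (g (r n) *v v))"
    "(\<lambda>n. c n *\<^sub>R g (r n)) \<longlonglongrightarrow> h" "(\<lambda>n. x (r n)) \<longlonglongrightarrow> x0"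
proof -
  have "\<forall>m. \<exists>\<sigma>::real. (\<sigma> = 1 \<or> \<sigma> = -1) \<and> (\<forall>v. joinable k v \<longrightarrow> joinable k (\<sigma> *\<^sub>R (g m *v v)))"
  proof
    fix m
    obtain \<sigma> :: real where "\<sigma> = 1 \<or> \<sigma> = -1" "\<And>v. joinable k v \<Longrightarrow> joinable k (\<sigma> *\<^sub>R (g m *v v))"
      using group_sign_preserves_component[OF kC gG[of m]] by blast
    then show "\<exists>\<sigma>::real. (\<sigma> = 1 \<or> \<sigma> = -1) \<and> (\<forall>v. joinable k v \<longrightarrow> joinable k (\<sigma> *\<^sub>R (g m *v v)))"
      by blast
  qed
  then obtain \<sigma> where \<sigma>: "\<And>m. \<sigma> m = 1 \<or> \<sigma> m = (-1::real)"
    "\<And>m v. joinable k v \<Longrightarrow> joinable k (\<sigma> m *\<^sub>R (g m *v v))"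
    by metis
  have ng: "norm (g m) > 0" for m using invertible_nonzero[OF group_invertible[OF gG]] by simp
  define c where "c m = \<sigma> m / norm (g m)" for m
  have c0: "c m \<noteq> 0" for m using \<sigma>(1)[of m] ng[of m] by (auto simp: c_def)
  have cj: "joinable k (c m *\<^sub>R (g m *v v))" if "joinable k v" for m v
    using joinable_scaleR[OF \<sigma>(2)[OF that], of "1 / norm (g m)"] ng[of m] by (simp add: c_def)
  have "norm (c m *\<^sub>R g m) = 1" for m using \<sigma>(1)[of m] ng[of m] by (auto simp: c_def)
  then have mem: "\<forall>m. (\<lambda>m. (c m *\<^sub>R g m, x m)) m \<in> sphere 0 1 \<times> Kv" using Kv(2) by simp
  have sc: "seq_compact (sphere (0::real^'n^'n) 1 \<times> Kv)"
    using Kv(1) by (intro compact_imp_seq_compact compact_Times compact_sphere)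
  obtain l r where lr: "l \<in> sphere 0 1 \<times> Kv" "strict_mono r"
      "((\<lambda>m. (c m *\<^sub>R g m, x m)) \<circ> r) \<longlonglongrightarrow> l"
    by (rule seq_compactE[OF sc mem])
  show ?thesis
  proof
    show "(\<lambda>n. c (r n) *\<^sub>R g (r n)) \<longlonglongrightarrow> fst l" "(\<lambda>n. x (r n)) \<longlonglongrightarrow> snd l"
      using tendsto_fst[OF lr(3)] tendsto_snd[OF lr(3)] by (simp_all add: o_def)
  qed (use lr c0 cj in auto)
qed

lemma cocompact_decomposition:
  assumes "acts_cocompactly G \<Omega>" "\<And>m. y m \<in> C"
  obtains Kv g x where "compact Kv" "Kv \<subseteq> C" "\<And>m. g m \<in> G" "\<And>m. x m \<in> Kv"
    "\<And>m. span {y m} = span {g m *v x m}"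
proof -
  obtain K where K: "compactin proj_top K" "K \<subseteq> \<Omega>" "\<Omega> = (\<Union>A\<in>G. proj_act A ` K)"
    using assms(1) unfolding acts_cocompactly_def by blast
  obtain Kv where Kv: "compact Kv" "Kv \<subseteq> C" "\<And>q. q \<in> K \<Longrightarrow> \<exists>v\<in>Kv. q = span {v}"
    using compactin_domain_lift[OF K(1,2)] by blast
  have "\<exists>A v. A \<in> G \<and> v \<in> Kv \<and> span {y m} = span {A *v v}" for m
  proof -
    have "span {y m} \<in> \<Omega>" using assms(2) by (simp add: C_def)
    then have "span {y m} \<in> (\<Union>A\<in>G. proj_act A ` K)" using K(3) by blast
    then obtain A q where "A \<in> G" "q \<in> K" "span {y m} = proj_act A q" by blast
    then show ?thesis using Kv(3) by (metis proj_act_span)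
  qed
  then obtain g x where "\<And>m. g m \<in> G" "\<And>m. x m \<in> Kv" "\<And>m. span {y m} = span {g m *v x m}"
    by metis
  with Kv(1,2) show ?thesis using that by blast
qed

lemma extreme_point_attracting_limit:
  assumes coc: "acts_cocompactly G \<Omega>" and pE: "p \<in> proj_Ext \<Omega>"
  obtains p0 h g c where "p0 \<noteq> 0" "p = span {p0}" "h \<noteq> 0" "\<And>v. v \<in> C \<Longrightarrow> h *v v \<noteq> 0"
    "\<And>u. h *v u \<in> span {p0}" "\<And>n. g n \<in> G" "\<And>n. c n \<noteq> (0::real)"
    "\<And>x. (\<lambda>n. c n *\<^sub>R (g n *v x)) \<longlonglongrightarrow> h *v x"
proof -
  have pcl: "p \<in> proj_top closure_of \<Omega>" using pE by (simp add: proj_Ext_def frontier_domain_iff)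
  then obtain p0 where p0: "p0 \<noteq> 0" "p = span {p0}" by (rule proj_closure_ofE)
  obtain y where y: "\<And>m. y m \<in> C" "y \<longlonglongrightarrow> p0" using domain_closure_sequence pcl p0 by blast
  obtain Kv g x where Kv: "compact Kv" "Kv \<subseteq> C" and gx: "\<And>m. g m \<in> G" "\<And>m. x m \<in> Kv"
    "\<And>m. span {y m} = span {g m *v x m}"
    by (rule cocompact_decomposition[of y, OF coc y(1)]) (rule that)
  have k0: "x 0 \<in> C" using gx(2) Kv(2) by blast
  obtain r c h k where r: "strict_mono r" and c: "\<And>n. c n \<noteq> 0" and "h \<noteq> 0" "k \<in> Kv"
    and M: "\<And>n v. joinable (x 0) v \<Longrightarrow> joinable (x 0) (c n *\<^sub>R (g (r n) *v v))"
    and lim: "(\<lambda>n. c n *\<^sub>R g (r n)) \<longlonglongrightarrow> h" and limx: "(\<lambda>n. x (r n)) \<longlonglongrightarrow> k"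
    by (rule normalized_subsequence_limit[of _ g Kv x, OF k0 gx(1) Kv(1) gx(2)]) (rule that)
  have Mv: "(c n *\<^sub>R g (r n)) *v v = c n *\<^sub>R (g (r n) *v v)" for n v
    by (simp add: scaleR_matrix_vector_assoc)
  have kC: "k \<in> C" using \<open>k \<in> Kv\<close> Kv(2) by blast
  have h_nonzero: "h *v v \<noteq> 0" if "v \<in> C" for v
    using limit_nonzero_on_C[OF k0 _ lim \<open>h \<noteq> 0\<close> that] M by (simp add: Mv)
  have eqs: "span {c n *\<^sub>R (g (r n) *v x (r n))} = span {y (r n)}" for n
    using gx(3) c by (simp add: span_singleton_scaleR)
  have nz: "c n *\<^sub>R (g (r n) *v x (r n)) \<noteq> 0" for n
  proof -
    have "x (r n) \<noteq> 0" using gx(2) Kv(2) C_nonzero by blast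
    then have "g (r n) *v x (r n) \<noteq> 0" by (rule invertible_mult_vec_nonzero[OF group_invertible[OF gx(1)]])
    then show ?thesis using c[of n] by simp
  qed
  have ynz: "y (r n) \<noteq> 0" for n using y(1) C_nonzero by blast
  have "(\<lambda>n. c n *\<^sub>R (g (r n) *v x (r n))) \<longlonglongrightarrow> h *v k"
    using tendsto_matrix_vector_mult[OF lim limx] by (simp add: Mv)
  moreover have "(\<lambda>n. y (r n)) \<longlonglongrightarrow> p0" using LIMSEQ_subseq_LIMSEQ[OF y(2) r] by (simp add: o_def)
  ultimately have hk: "span {h *v k} = span {p0}"
    by (rule span_eq_limit[OF eqs nz ynz _ _ h_nonzero[OF kC] p0(1)])
  obtain k' where k': "joinable (x 0) k'" "span {h *v k'} = span {p0}"
  proof (cases "joinable (x 0) k")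
    case False
    then have "joinable (x 0) (- k)" using joinable_or_joinable_uminus[OF k0 kC] by blast
    moreover have "span {h *v - k} = span {p0}"
      using hk span_singleton_scaleR[of "-1" "h *v k"] by (simp add: matrix_vector_mult_uminus_right)
    ultimately show ?thesis using that by blast
  qed (use hk that in blast)
  have "h *v v \<in> span {p0}" if "v \<in> C" for v
    using limit_maps_C_into_extreme_line[OF k0 _ lim k'(1) _ that] M pE p0(2) k'(2) by (simp add: Mv)
  then have img: "h *v u \<in> span {p0}" for u
    by (rule matrix_image_subset_of_open[OF open_C kC _ subspace_span])
  have conv: "(\<lambda>n. c n *\<^sub>R (g (r n) *v v)) \<longlonglongrightarrow> h *v v" for v
    using tendsto_matrix_vector_mult[OF lim tendsto_const] by (simp add: Mv)
  show ?thesis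
    by (rule that[of p0 h "\<lambda>n. g (r n)" c]) (use p0 \<open>h \<noteq> 0\<close> h_nonzero img gx(1) c conv in auto)
qed

lemma extreme_point_in_orbit_closure:
  assumes coc: "acts_cocompactly G \<Omega>" and pE: "p \<in> proj_Ext \<Omega>" and x0: "x0 \<noteq> 0"
    and moves: "\<And>h::real^'n^'n. h \<noteq> 0 \<Longrightarrow> (\<forall>v\<in>C. h *v v \<noteq> 0) \<Longrightarrow> \<exists>\<gamma>\<in>G. h *v (\<gamma> *v x0) \<noteq> 0"
  shows "p \<in> proj_top closure_of (orbit G (span {x0}))"
proof -
  obtain p0 h g c where p0: "p0 \<noteq> 0" "p = span {p0}" and "h \<noteq> 0" "\<And>v. v \<in> C \<Longrightarrow> h *v v \<noteq> 0"
    and img: "\<And>u. h *v u \<in> span {p0}" and g: "\<And>n. g n \<in> G" and c: "\<And>n. c n \<noteq> 0"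
    and lim: "\<And>x. (\<lambda>n. c n *\<^sub>R (g n *v x)) \<longlonglongrightarrow> h *v x"
    by (rule extreme_point_attracting_limit[OF coc pE]) (rule that)
  then obtain \<gamma> where \<gamma>: "\<gamma> \<in> G" "h *v (\<gamma> *v x0) \<noteq> 0" using moves by blast
  define y0 where "y0 = \<gamma> *v x0"
  have hy: "h *v y0 \<noteq> 0" using \<gamma> by (simp add: y0_def)
  obtain a where "h *v y0 = a *\<^sub>R p0" using img[of y0] by (auto simp: span_singleton scaleR_conv_of_real)
  then have "span {h *v y0} = span {p0}" using hy by (simp add: span_singleton_scaleR)
  moreover have "\<exists>u. u \<noteq> 0 \<and> span {u} \<in> orbit G (span {x0}) \<and> dist u (h *v y0) < e" if "e > 0" for e
  proof -
    have "\<forall>\<^sub>F n in sequentially. dist (c n *\<^sub>R (g n *v y0)) (h *v y0) < e"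
      using tendstoD[OF lim that] .
    then obtain N where N: "dist (c N *\<^sub>R (g N *v y0)) (h *v y0) < e"
      by (auto simp: eventually_sequentially)
    have "y0 \<noteq> 0" using hy by auto
    then have "g N *v y0 \<noteq> 0" by (rule invertible_mult_vec_nonzero[OF group_invertible[OF g]])
    then have "c N *\<^sub>R (g N *v y0) \<noteq> 0" using c by simp
    moreover have "span {c N *\<^sub>R (g N *v y0)} = proj_act (g N ** \<gamma>) (span {x0})"
      using c by (simp add: span_singleton_scaleR proj_act_span y0_def matrix_vector_mul_assoc)
    moreover have "g N ** \<gamma> \<in> G" using group g \<gamma>(1) by (simp add: matrix_group_def)
    ultimately show ?thesis using N unfolding orbit_def by blast
  qed
  ultimately show ?thesis
    using span_in_proj_closure_iff[OF hy] p0(2) by simp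
qed

text \<open>The linear span of an orbit is invariant, so it is everything.\<close>

lemma irreducible_orbit_not_in_kernel:
  assumes irr: "\<not> preserves_proper_subspace G" and x0: "x0 \<noteq> 0" and "h \<noteq> 0"
  shows "\<exists>\<gamma>\<in>G. h *v (\<gamma> *v x0) \<noteq> 0"
proof (rule ccontr)
  assume "\<not> (\<exists>\<gamma>\<in>G. h *v (\<gamma> *v x0) \<noteq> 0)"
  then have kernel: "\<And>\<gamma>. \<gamma> \<in> G \<Longrightarrow> h *v (\<gamma> *v x0) = 0" by blast
  define W where "W = span {A *v x0 | A. A \<in> G}"
  have sub: "(\<lambda>v. A *v v) ` W \<subseteq> W" if "A \<in> G" for A
  proof -
    have "(\<lambda>v. A *v v) ` W = span ((\<lambda>v. A *v v) ` {A *v x0 | A. A \<in> G})" unfolding W_def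
      by (rule span_linear_image[symmetric]) simp
    also have "\<dots> \<subseteq> W" unfolding W_def
      using group that by (intro span_mono) (auto simp: matrix_group_def matrix_vector_mul_assoc)
    finally show ?thesis .
  qed
  have "(\<lambda>v. A *v v) ` W = W" if "A \<in> G" for A
  proof
    show "W \<subseteq> (\<lambda>v. A *v v) ` W"
    proof
      fix w assume "w \<in> W"
      have "matrix_inv A \<in> G" using group that by (simp add: matrix_group_def)
      then have "matrix_inv A *v w \<in> W" using sub \<open>w \<in> W\<close> by blast
      moreover have "A *v (matrix_inv A *v w) = w"
        using matrix_mul_matrix_inv[OF group_invertible[OF that]] by (simp add: matrix_vector_mul_assoc)
      ultimately show "w \<in> (\<lambda>v. A *v v) ` W" by (metis image_eqI)
    qed
  qed (rule sub[OF that])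
  moreover have "x0 \<in> W"
  proof -
    have "mat 1 \<in> G" using group by (simp add: matrix_group_def)
    then have "mat 1 *v x0 \<in> {A *v x0 | A. A \<in> G}" by blast
    then show ?thesis unfolding W_def by (simp add: span_base)
  qed
  ultimately have "W = UNIV"
    using irr x0 subspace_span unfolding preserves_proper_subspace_def W_def by blast
  moreover have "W \<subseteq> {u. h *v u = 0}" unfolding W_def using kernel
    by (intro span_minimal) (auto simp: subspace_def matrix_vector_right_distrib matrix_vector_mult_scaleR)
  ultimately have "h = 0" by (auto simp: matrix_eq)
  then show False using \<open>h \<noteq> 0\<close> by simp
qed

end

theorem lemma5p5:
  fixes \<Omega> :: "(real^'n) set set" and G :: "(real^'n^'n) set"
  assumes "openin proj_top \<Omega>" and "proj_convex \<Omega>" and "proj_proper \<Omega>"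
    and "matrix_group G" and "in_Aut G \<Omega>" and "acts_cocompactly G \<Omega>"
  shows "(\<forall>x\<in>\<Omega>. proj_Ext \<Omega> \<subseteq> proj_top closure_of (orbit G x)) \<and>
         (\<not> preserves_proper_subspace G \<longrightarrow>
            (\<forall>x\<in>proj_top closure_of \<Omega>. proj_Ext \<Omega> \<subseteq> proj_top closure_of (orbit G x)))"
proof -
  interpret proper_convex_domain_group \<Omega> G by unfold_locales (use assms in auto)
  have "proj_Ext \<Omega> \<subseteq> proj_top closure_of (orbit G x)" if "x \<in> \<Omega>" for x
  proof -
    obtain x0 where "x0 \<in> C" "x = span {x0}" using \<open>x \<in> \<Omega>\<close> by (rule domain_memE)
    moreover have "mat 1 \<in> G" using assms(4) by (simp add: matrix_group_def)
    ultimately show ?thesis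
      using extreme_point_in_orbit_closure[OF assms(6) _ C_nonzero] by (metis matrix_vector_mul_lid subsetI)
  qed
  moreover have "proj_Ext \<Omega> \<subseteq> proj_top closure_of (orbit G x)"
    if "\<not> preserves_proper_subspace G" "x \<in> proj_top closure_of \<Omega>" for x
  proof -
    obtain x0 where "x0 \<noteq> 0" "x = span {x0}" using \<open>x \<in> _\<close> by (rule proj_closure_ofE)
    then show ?thesis
      using extreme_point_in_orbit_closure[OF assms(6)] irreducible_orbit_not_in_kernel[OF that(1)] by blast
  qed
  ultimately show ?thesis by blast
qed

end
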